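(* Let $H=\Bbbk^G{}^\tau\#_\sigma\Bbbk F$ be the Hopf algebra described in the context and for $f\in F$ let $C_f=\mathrm{span}\{p_g\#(g'\triangleright f)\mid g,g'\in G\}$. (1) For every $f\in F$, $C_f$ is a cosemisimple subcoalgebra of $H$; moreover $C_{1_F}$ is a (cosemisimple) Hopf subalgebra of $H$ and $C_{1_F}\cong\Bbbk^G$ as Hopf algebras via $p_g\#1_F\mapsto p_g$. (2) If $G_f=\{1_G\}$, then $C_f$ is a simple subcoalgebra of $H$, and in this case $S(C_f)=C_f$ if and only if $G_{f,f^{-1}}\neq\emptyset$.
   Context: Standing setup: $\Bbbk$ is an algebraically closed field of characteristic $0$, $F$ a group (possibly infinite), $G$ a finite group, and $(F,G,\triangleleft,\triangleright)$ a matched pair: $\triangleright:G\times F\to F$ a left action of $G$ on the set $F$, $\triangleleft:G\times F\to G$ a right action of $F$ on the set $G$, with $g\triangleright(ff')=(g\triangleright f)((g\triangleleft f)\triangleright f')$ and $(gg')\triangleleft f=(g\triangleleft(g'\triangleright f))(g'\triangleleft f)$. Maps $\sigma:G\times F\times F\to\Bbbk^\times$, $(g,f,f')\mapsto\sigma(g;f,f')$, and $\tau:G\times G\times F\to\Bbbk^\times$, $(g,g',f)\mapsto\tau(g,g';f)$, satisfy: $\sigma(g;1_F,f)=\sigma(g;f,1_F)=\sigma(1_G;f,f')=1$; $\sigma(g\triangleleft f;f',f'')\sigma(g;f,f'f'')=\sigma(g;f,f')\sigma(g;ff',f'')$; $\tau(1_G,g;f)=\tau(g,1_G;f)=\tau(g,g';1_F)=1$;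 $\tau(g,g';g''\triangleright f)\tau(gg',g'';f)=\tau(g,g'g'';f)\tau(g',g'';f)$; and $\sigma(gg';f,f')\tau(g,g';ff')=\sigma(g;g'\triangleright f,(g'\triangleleft f)\triangleright f')\sigma(g';f,f')\tau(g,g';f)\tau(g\triangleleft(g'\triangleright f),g'\triangleleft f;f')$. $H$ has basis $\{p_g\#f\}$ ($\{p_g\}$ the dual basis of $\Bbbk^G$), unit $\sum_g p_g\#1_F$, product $(p_g\#f)(p_{g'}\#f')=\delta_{g\triangleleft f,g'}\sigma(g;f,f')p_g\#ff'$, coproduct $\Delta(p_g\#f)=\sum_{x\in G}\tau(gx^{-1},x;f)\,p_{gx^{-1}}\#(x\triangleright f)\otimes p_x\#f$, counit $\varepsilon(p_g\#f)=\delta_{g,1_G}$, antipode $S(p_g\#f)=\sigma(g^{-1};g\triangleright f,(g\triangleright f)^{-1})^{-1}\tau(g^{-1},g;f)^{-1}p_{(g\triangleleft f)^{-1}}\#(g\triangleright f)^{-1}$. Notation: $G_f=\{g\in G\mid g\triangleright f=f\}$ and $G_{f,f^{-1}}=\{g\in G\mid g\triangleright f=f^{-1}\}$. *)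

theory Defs
  imports "HOL-Algebra.Group" "HOL-Computational_Algebra.Polynomial"
begin

locale matched_pair =
  F: group F + G: group G
  for F :: "'f monoid" and G :: "'g monoid"
  + fixes lact :: "'g \<Rightarrow> 'f \<Rightarrow> 'f"
    and ract :: "'g \<Rightarrow> 'f \<Rightarrow> 'g"
    and \<sigma> :: "'g \<Rightarrow> 'f \<Rightarrow> 'f \<Rightarrow> 'k::field"
    and \<tau> :: "'g \<Rightarrow> 'g \<Rightarrow> 'f \<Rightarrow> 'k"
  assumes G_finite: "finite (carrier G)"
    and lact_closed: "\<lbrakk>g \<in> carrier G; f \<in> carrier F\<rbrakk> \<Longrightarrow> lact g f \<in> carrier F"
    and ract_closed: "\<lbrakk>g \<in> carrier G; f \<in> carrier F\<rbrakk> \<Longrightarrow> ract g f \<in> carrier G"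
    and lact_one: "f \<in> carrier F \<Longrightarrow> lact \<one>\<^bsub>G\<^esub> f = f"
    and lact_mult: "\<lbrakk>g \<in> carrier G; g' \<in> carrier G; f \<in> carrier F\<rbrakk> \<Longrightarrow>
        lact (g \<otimes>\<^bsub>G\<^esub> g') f = lact g (lact g' f)"
    and ract_one: "g \<in> carrier G \<Longrightarrow> ract g \<one>\<^bsub>F\<^esub> = g"
    and ract_mult: "\<lbrakk>g \<in> carrier G; f \<in> carrier F; f' \<in> carrier F\<rbrakk> \<Longrightarrow>
        ract g (f \<otimes>\<^bsub>F\<^esub> f') = ract (ract g f) f'"
    and mp_lact: "\<lbrakk>g \<in> carrier G; f \<in> carrier F; f' \<in> carrier F\<rbrakk> \<Longrightarrow>
        lact g (f \<otimes>\<^bsub>F\<^esub> f') = lact g f \<otimes>\<^bsub>F\<^esub> lact (ract g f) f'"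
    and mp_ract: "\<lbrakk>g \<in> carrier G; g' \<in> carrier G; f \<in> carrier F\<rbrakk> \<Longrightarrow>
        ract (g \<otimes>\<^bsub>G\<^esub> g') f = ract g (lact g' f) \<otimes>\<^bsub>G\<^esub> ract g' f"
    and sigma_nonzero: "\<lbrakk>g \<in> carrier G; f \<in> carrier F; f' \<in> carrier F\<rbrakk> \<Longrightarrow> \<sigma> g f f' \<noteq> 0"
    and tau_nonzero: "\<lbrakk>g \<in> carrier G; g' \<in> carrier G; f \<in> carrier F\<rbrakk> \<Longrightarrow> \<tau> g g' f \<noteq> 0"
    and sigma_norm: "\<lbrakk>g \<in> carrier G; f \<in> carrier F; f' \<in> carrier F\<rbrakk> \<Longrightarrow>
        \<sigma> g \<one>\<^bsub>F\<^esub> f = 1 \<and> \<sigma> g f \<one>\<^bsub>F\<^esub> = 1 \<and> \<sigma> \<one>\<^bsub>G\<^esub> f f' = 1"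
    and sigma_cocycle: "\<lbrakk>g \<in> carrier G; f \<in> carrier F; f' \<in> carrier F; f'' \<in> carrier F\<rbrakk> \<Longrightarrow>
        \<sigma> (ract g f) f' f'' * \<sigma> g f (f' \<otimes>\<^bsub>F\<^esub> f'')
          = \<sigma> g f f' * \<sigma> g (f \<otimes>\<^bsub>F\<^esub> f') f''"
    and tau_norm: "\<lbrakk>g \<in> carrier G; g' \<in> carrier G; f \<in> carrier F\<rbrakk> \<Longrightarrow>
        \<tau> \<one>\<^bsub>G\<^esub> g f = 1 \<and> \<tau> g \<one>\<^bsub>G\<^esub> f = 1 \<and> \<tau> g g' \<one>\<^bsub>F\<^esub> = 1"
    and tau_cocycle: "\<lbrakk>g \<in> carrier G; g' \<in> carrier G; g'' \<in> carrier G; f \<in> carrier F\<rbrakk> \<Longrightarrow>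
        \<tau> g g' (lact g'' f) * \<tau> (g \<otimes>\<^bsub>G\<^esub> g') g'' f
          = \<tau> g (g' \<otimes>\<^bsub>G\<^esub> g'') f * \<tau> g' g'' f"
    and sigma_tau_compat: "\<lbrakk>g \<in> carrier G; g' \<in> carrier G; f \<in> carrier F; f' \<in> carrier F\<rbrakk> \<Longrightarrow>
        \<sigma> (g \<otimes>\<^bsub>G\<^esub> g') f f' * \<tau> g g' (f \<otimes>\<^bsub>F\<^esub> f')
          = \<sigma> g (lact g' f) (lact (ract g' f) f') * \<sigma> g' f f' * \<tau> g g' f
            * \<tau> (ract g (lact g' f)) (ract g' f) f'"

section \<open>Finitely supported functions as vector spaces with a distinguished basis\<close>

definition supp :: "('i \<Rightarrow> 'k::zero) \<Rightarrow> 'i set" where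
  "supp h = {i. h i \<noteq> 0}"

definition fin_fun :: "'i set \<Rightarrow> ('i \<Rightarrow> 'k::zero) set" where
  "fin_fun I = {h. finite (supp h) \<and> supp h \<subseteq> I}"

definition bvec :: "'i \<Rightarrow> 'i \<Rightarrow> 'k::{zero,one}" where
  "bvec i = (\<lambda>j. if j = i then 1 else 0)"

definition lin_ext :: "('i \<Rightarrow> 'j \<Rightarrow> 'k::comm_ring_1) \<Rightarrow> ('i \<Rightarrow> 'k) \<Rightarrow> 'j \<Rightarrow> 'k" where
  "lin_ext \<phi> h = (\<lambda>j. \<Sum>i\<in>supp h. h i * \<phi> i j)"

definition bilin_ext :: "('i \<Rightarrow> 'i2 \<Rightarrow> 'j \<Rightarrow> 'k::comm_ring_1) \<Rightarrow> ('i \<Rightarrow> 'k) \<Rightarrow> ('i2 \<Rightarrow> 'k) \<Rightarrow> 'j \<Rightarrow> 'k" where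
  "bilin_ext \<mu> x y = (\<lambda>j. \<Sum>i\<in>supp x. \<Sum>i2\<in>supp y. x i * y i2 * \<mu> i i2 j)"

text \<open>Tensor product of vectors: basis of the tensor product is indexed by pairs.\<close>
definition tensor :: "('i \<Rightarrow> 'k::times) \<Rightarrow> ('j \<Rightarrow> 'k) \<Rightarrow> 'i \<times> 'j \<Rightarrow> 'k" where
  "tensor x y = (\<lambda>(i, j). x i * y j)"

definition tensor_map :: "(('i \<Rightarrow> 'k::comm_ring_1) \<Rightarrow> 'j \<Rightarrow> 'k) \<Rightarrow> (('i2 \<Rightarrow> 'k) \<Rightarrow> 'j2 \<Rightarrow> 'k)
    \<Rightarrow> ('i \<times> 'i2 \<Rightarrow> 'k) \<Rightarrow> 'j \<times> 'j2 \<Rightarrow> 'k" where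
  "tensor_map \<phi> \<psi> = lin_ext (\<lambda>(i, i2). tensor (\<phi> (bvec i)) (\<psi> (bvec i2)))"

definition lspan :: "('i \<Rightarrow> 'k::comm_ring_1) set \<Rightarrow> ('i \<Rightarrow> 'k) set" where
  "lspan V = {v. \<exists>A c. finite A \<and> A \<subseteq> V \<and> v = (\<lambda>j. \<Sum>a\<in>A. c a * a j)}"

definition lsubspace :: "('i \<Rightarrow> 'k::comm_ring_1) set \<Rightarrow> bool" where
  "lsubspace D \<longleftrightarrow> (\<lambda>_. 0) \<in> D \<and> (\<forall>x\<in>D. \<forall>y\<in>D. (\<lambda>j. x j + y j) \<in> D)
      \<and> (\<forall>c x. x \<in> D \<longrightarrow> (\<lambda>j. c * x j) \<in> D)"

definition linear_on :: "('i \<Rightarrow> 'k::comm_ring_1) set \<Rightarrow> (('i \<Rightarrow> 'k) \<Rightarrow> 'j \<Rightarrow> 'k) \<Rightarrow> bool" where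
  "linear_on D \<phi> \<longleftrightarrow> (\<forall>x\<in>D. \<forall>y\<in>D. \<phi> (\<lambda>j. x j + y j) = (\<lambda>j. \<phi> x j + \<phi> y j))
      \<and> (\<forall>c. \<forall>x\<in>D. \<phi> (\<lambda>j. c * x j) = (\<lambda>j. c * \<phi> x j))"

definition subcoalgebra ::
  "('i \<Rightarrow> 'k::comm_ring_1) set \<Rightarrow> (('i \<Rightarrow> 'k) \<Rightarrow> 'i \<times> 'i \<Rightarrow> 'k) \<Rightarrow> ('i \<Rightarrow> 'k) set \<Rightarrow> bool" where
  "subcoalgebra V \<Delta> D \<longleftrightarrow> D \<subseteq> V \<and> lsubspace D
     \<and> (\<forall>d\<in>D. \<Delta> d \<in> lspan {tensor x y | x y. x \<in> D \<and> y \<in> D})"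

definition simple_subcoalgebra ::
  "('i \<Rightarrow> 'k::comm_ring_1) set \<Rightarrow> (('i \<Rightarrow> 'k) \<Rightarrow> 'i \<times> 'i \<Rightarrow> 'k) \<Rightarrow> ('i \<Rightarrow> 'k) set \<Rightarrow> bool" where
  "simple_subcoalgebra V \<Delta> D \<longleftrightarrow> subcoalgebra V \<Delta> D \<and> D \<noteq> {\<lambda>_. 0}
     \<and> (\<forall>E. subcoalgebra V \<Delta> E \<and> E \<subseteq> D \<longrightarrow> E = {\<lambda>_. 0} \<or> E = D)"

definition cosemisimple_subcoalgebra ::
  "('i \<Rightarrow> 'k::comm_ring_1) set \<Rightarrow> (('i \<Rightarrow> 'k) \<Rightarrow> 'i \<times> 'i \<Rightarrow> 'k) \<Rightarrow> ('i \<Rightarrow> 'k) set \<Rightarrow> bool" where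
  "cosemisimple_subcoalgebra V \<Delta> D \<longleftrightarrow> subcoalgebra V \<Delta> D
     \<and> (\<exists>\<S>. (\<forall>S\<in>\<S>. simple_subcoalgebra V \<Delta> S) \<and> D = lspan (\<Union>\<S>)
          \<and> (\<forall>S\<in>\<S>. S \<inter> lspan (\<Union>(\<S> - {S})) = {\<lambda>_. 0}))"

section \<open>The Hopf algebra H = k^G {}^\<tau>#_\<sigma> kF; basis p_g # f is bvec (g, f)\<close>

definition Hspace :: "'f monoid \<Rightarrow> 'g monoid \<Rightarrow> ('g \<times> 'f \<Rightarrow> 'k::comm_ring_1) set" where
  "Hspace F G = fin_fun (carrier G \<times> carrier F)"

definition Hmult :: "'f monoid \<Rightarrow> 'g monoid \<Rightarrow> ('g \<Rightarrow> 'f \<Rightarrow> 'g) \<Rightarrow> ('g \<Rightarrow> 'f \<Rightarrow> 'f \<Rightarrow> 'k::field)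
    \<Rightarrow> ('g \<times> 'f \<Rightarrow> 'k) \<Rightarrow> ('g \<times> 'f \<Rightarrow> 'k) \<Rightarrow> 'g \<times> 'f \<Rightarrow> 'k" where
  "Hmult F G ract \<sigma> = bilin_ext (\<lambda>(g, f) (g', f') j.
      (if ract g f = g' then \<sigma> g f f' else 0) * bvec (g, f \<otimes>\<^bsub>F\<^esub> f') j)"

definition Hunit :: "'f monoid \<Rightarrow> 'g monoid \<Rightarrow> 'g \<times> 'f \<Rightarrow> 'k::comm_ring_1" where
  "Hunit F G = (\<lambda>j. \<Sum>g\<in>carrier G. bvec (g, \<one>\<^bsub>F\<^esub>) j)"

definition Hcomul :: "'f monoid \<Rightarrow> 'g monoid \<Rightarrow> ('g \<Rightarrow> 'f \<Rightarrow> 'f) \<Rightarrow> ('g \<Rightarrow> 'g \<Rightarrow> 'f \<Rightarrow> 'k::field)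
    \<Rightarrow> ('g \<times> 'f \<Rightarrow> 'k) \<Rightarrow> ('g \<times> 'f) \<times> ('g \<times> 'f) \<Rightarrow> 'k" where
  "Hcomul F G lact \<tau> = lin_ext (\<lambda>(g, f) t. \<Sum>x\<in>carrier G.
      \<tau> (g \<otimes>\<^bsub>G\<^esub> inv\<^bsub>G\<^esub> x) x f
        * tensor (bvec (g \<otimes>\<^bsub>G\<^esub> inv\<^bsub>G\<^esub> x, lact x f)) (bvec (x, f)) t)"

definition Hcounit :: "'f monoid \<Rightarrow> 'g monoid \<Rightarrow> ('g \<times> 'f \<Rightarrow> 'k::comm_ring_1) \<Rightarrow> 'k" where
  "Hcounit F G h = (\<Sum>i\<in>supp h. h i * (if fst i = \<one>\<^bsub>G\<^esub> then 1 else 0))"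

definition Hantipode :: "'f monoid \<Rightarrow> 'g monoid \<Rightarrow> ('g \<Rightarrow> 'f \<Rightarrow> 'f) \<Rightarrow> ('g \<Rightarrow> 'f \<Rightarrow> 'g)
    \<Rightarrow> ('g \<Rightarrow> 'f \<Rightarrow> 'f \<Rightarrow> 'k::field) \<Rightarrow> ('g \<Rightarrow> 'g \<Rightarrow> 'f \<Rightarrow> 'k)
    \<Rightarrow> ('g \<times> 'f \<Rightarrow> 'k) \<Rightarrow> 'g \<times> 'f \<Rightarrow> 'k" where
  "Hantipode F G lact ract \<sigma> \<tau> = lin_ext (\<lambda>(g, f) j.
      inverse (\<sigma> (inv\<^bsub>G\<^esub> g) (lact g f) (inv\<^bsub>F\<^esub> (lact g f)))
      * inverse (\<tau> (inv\<^bsub>G\<^esub> g) g f)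
      * bvec (inv\<^bsub>G\<^esub> (ract g f), inv\<^bsub>F\<^esub> (lact g f)) j)"

definition Csub :: "'f monoid \<Rightarrow> 'g monoid \<Rightarrow> ('g \<Rightarrow> 'f \<Rightarrow> 'f) \<Rightarrow> 'f \<Rightarrow> ('g \<times> 'f \<Rightarrow> 'k::comm_ring_1) set" where
  "Csub F G lact f = lspan {bvec (g, lact g' f) | g g'. g \<in> carrier G \<and> g' \<in> carrier G}"

definition stabilizer :: "'g monoid \<Rightarrow> ('g \<Rightarrow> 'f \<Rightarrow> 'f) \<Rightarrow> 'f \<Rightarrow> 'g set" where
  "stabilizer G lact f = {g \<in> carrier G. lact g f = f}"

definition inv_stabilizer :: "'f monoid \<Rightarrow> 'g monoid \<Rightarrow> ('g \<Rightarrow> 'f \<Rightarrow> 'f) \<Rightarrow> 'f \<Rightarrow> 'g set" where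
  "inv_stabilizer F G lact f = {g \<in> carrier G. lact g f = inv\<^bsub>F\<^esub> f}"

definition Hopf_subalgebra :: "'f monoid \<Rightarrow> 'g monoid \<Rightarrow> ('g \<Rightarrow> 'f \<Rightarrow> 'f) \<Rightarrow> ('g \<Rightarrow> 'f \<Rightarrow> 'g)
    \<Rightarrow> ('g \<Rightarrow> 'f \<Rightarrow> 'f \<Rightarrow> 'k::field) \<Rightarrow> ('g \<Rightarrow> 'g \<Rightarrow> 'f \<Rightarrow> 'k) \<Rightarrow> ('g \<times> 'f \<Rightarrow> 'k) set \<Rightarrow> bool" where
  "Hopf_subalgebra F G lact ract \<sigma> \<tau> D \<longleftrightarrow>
     subcoalgebra (Hspace F G) (Hcomul F G lact \<tau>) D
     \<and> Hunit F G \<in> D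
     \<and> (\<forall>x\<in>D. \<forall>y\<in>D. Hmult F G ract \<sigma> x y \<in> D)
     \<and> (\<forall>x\<in>D. Hantipode F G lact ract \<sigma> \<tau> x \<in> D)"

section \<open>The dual group Hopf algebra k^G; basis p_g is bvec g\<close>

definition kGspace :: "'g monoid \<Rightarrow> ('g \<Rightarrow> 'k::comm_ring_1) set" where
  "kGspace G = fin_fun (carrier G)"

definition kGmult :: "('g \<Rightarrow> 'k::comm_ring_1) \<Rightarrow> ('g \<Rightarrow> 'k) \<Rightarrow> 'g \<Rightarrow> 'k" where
  "kGmult = bilin_ext (\<lambda>g g' j. (if g = g' then 1 else 0) * bvec g j)"

definition kGunit :: "'g monoid \<Rightarrow> 'g \<Rightarrow> 'k::comm_ring_1" where
  "kGunit G = (\<lambda>j. \<Sum>g\<in>carrier G. bvec g j)"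

definition kGcomul :: "'g monoid \<Rightarrow> ('g \<Rightarrow> 'k::comm_ring_1) \<Rightarrow> 'g \<times> 'g \<Rightarrow> 'k" where
  "kGcomul G = lin_ext (\<lambda>g t. \<Sum>x\<in>carrier G. tensor (bvec (g \<otimes>\<^bsub>G\<^esub> inv\<^bsub>G\<^esub> x)) (bvec x) t)"

definition kGcounit :: "'g monoid \<Rightarrow> ('g \<Rightarrow> 'k::comm_ring_1) \<Rightarrow> 'k" where
  "kGcounit G h = (\<Sum>i\<in>supp h. h i * (if i = \<one>\<^bsub>G\<^esub> then 1 else 0))"

definition kGantipode :: "'g monoid \<Rightarrow> ('g \<Rightarrow> 'k::comm_ring_1) \<Rightarrow> 'g \<Rightarrow> 'k" where
  "kGantipode G = lin_ext (\<lambda>g. bvec (inv\<^bsub>G\<^esub> g))"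

end

(*
  The basis vectors p_g # (g' |> f) of C_f are indexed by G x (G |> f). Slicing the comultiplication
  along dual basis vectors gives the hit actions c <- e_j and e_i -> c; a subspace of C_f is a
  subcoalgebra exactly when it is stable under both, and on C_f they compose like the
  tau-twisted groupoid algebra of the action groupoid of G on the orbit G |> f.

  Cosemisimplicity is Maschke's argument: averaging a linear projection onto a subcoalgebra with
  the weights tau(a, a^-1, h)^-1 / |G| (possible in characteristic 0) makes it commute with both
  hit actions, so the image of id - P is a complementary subcoalgebra, and induction on the
  dimension splits C_f into simple subcoalgebras. If G_f is trivial, a left hit composed with a
  right hit turns any nonzero element into a nonzero multiple of any prescribed basis vector, so
  C_f is simple. The antipode maps basis vectors to nonzero multiples of basis vectors through an
  injective index map, which preserves the index set of C_f iff f^-1 lies in the orbit of f. On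
  C_1 the cocycles are trivial and the structure maps are those of k^G.
*)
theory Submission
  imports Defs "HOL-Library.Function_Algebras"
begin

definition fscale :: "'k::field \<Rightarrow> ('i \<Rightarrow> 'k) \<Rightarrow> 'i \<Rightarrow> 'k" where
  "fscale c x = (\<lambda>j. c * x j)"

interpretation V: vector_space fscale
  by unfold_locales (auto simp: fscale_def fun_eq_iff algebra_simps)

interpretation VP: vector_space_pair fscale fscale ..

abbreviation flinear :: "(('i \<Rightarrow> 'k::field) \<Rightarrow> 'j \<Rightarrow> 'k) \<Rightarrow> bool" where
  "flinear \<equiv> Vector_Spaces.linear fscale fscale"

lemma fscale_apply [simp]: "fscale c x j = c * x j"
  by (simp add: fscale_def)

lemma sum_fun_apply: "(sum f A) x = (\<Sum>a\<in>A. f a x)"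
  by (induct A rule: infinite_finite_induct) auto

lemma lspan_eq_span: "lspan X = V.span X"
proof -
  have "(\<lambda>j. \<Sum>a\<in>A. c a * a j) = (\<Sum>a\<in>A. fscale (c a) a)" for A and c :: "('a \<Rightarrow> 'b) \<Rightarrow> 'b"
    by (auto simp: fun_eq_iff sum_fun_apply)
  then show ?thesis unfolding lspan_def V.span_explicit by auto
qed

lemma lsubspace_eq_subspace: "lsubspace D = V.subspace D"
  unfolding lsubspace_def V.subspace_def
  by (auto simp: fscale_def zero_fun_def plus_fun_def)

lemma zero_fun_singleton: "{\<lambda>_. 0} = {0 :: 'a \<Rightarrow> 'b::zero}"
  by (simp add: zero_fun_def)

lemma flinearI:
  assumes "\<And>x y. X (x + y) = X x + X y" and "\<And>c x. X (fscale c x) = fscale c (X x)"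
  shows "flinear X"
  using assms by (simp add: Vector_Spaces.linear_iff V.vector_space_axioms)

lemma dim_less_if_psubset:
  assumes "V.subspace D" "V.subspace E" "D \<subset> E" "E \<subseteq> V.span W" "finite W"
  shows "V.dim D < V.dim E"
proof -
  obtain bD where bD: "bD \<subseteq> D" "V.independent bD" "D \<subseteq> V.span bD" "card bD = V.dim D"
    by (rule V.basis_exists)
  obtain bE where bE: "bD \<subseteq> bE" "bE \<subseteq> E" "V.independent bE" "E \<subseteq> V.span bE"
    using V.maximal_independent_subset_extend[of bD E] bD assms(3) by blast
  have "finite bE"
    using V.independent_span_bound[OF assms(5) bE(3)] bE(2) assms(4) by auto
  moreover have "bD \<noteq> bE"
    using bE(4) V.span_minimal[OF bD(1) assms(1)] assms(3) by auto
  ultimately have "card bD < card bE"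
    using bE(1) by (intro psubset_card_mono) auto
  then show ?thesis
    using bD(4) V.basis_card_eq_dim[OF bE(2) bE(4) bE(3)] by simp
qed

lemma subspace_projection_exists:
  assumes "V.subspace S"
  obtains p where "flinear p" "\<And>w. p w \<in> S" "\<And>s. s \<in> S \<Longrightarrow> p s = s"
proof -
  obtain B where B: "B \<subseteq> S" "V.independent B" "S \<subseteq> V.span B"
    by (rule V.basis_exists)
  define p where "p = VP.construct B (\<lambda>x. x)"
  have lp: "flinear p"
    unfolding p_def by (rule VP.linear_construct[OF B(2)])
  moreover have "p w \<in> S" for w
    using VP.construct_in_span[OF B(2), of "\<lambda>x. x" w] V.span_minimal[OF B(1) assms]
    unfolding p_def by auto
  moreover have "p s = s" if "s \<in> S" for s
    using VP.linear_eq_on[OF lp V.linear_ident, of s B] B(3) that VP.construct_basis[OF B(2)]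
    unfolding p_def by auto
  ultimately show ?thesis by (rule that)
qed

lemma projection_complement:
  assumes P: "flinear P" "\<And>c. P c \<in> S" "\<And>s. s \<in> S \<Longrightarrow> P s = s"
    and D: "V.subspace D" "S \<subseteq> D"
  shows "(\<lambda>c. c - P c) ` D \<subseteq> D" and "S \<inter> (\<lambda>c. c - P c) ` D = {0}"
    and "D = {x + y | x y. x \<in> S \<and> y \<in> (\<lambda>c. c - P c) ` D}"
proof -
  let ?Q = "\<lambda>c. c - P c"
  show QD: "?Q ` D \<subseteq> D"
    using V.subspace_diff[OF D(1)] P(2) D(2) by blast
  have PQ: "P (?Q c) = 0" for c
    using VP.linear_diff[OF P(1)] P(2,3) by simp
  show "S \<inter> ?Q ` D = {0}"
  proof
    show "S \<inter> ?Q ` D \<subseteq> {0}"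
    proof
      fix x assume "x \<in> S \<inter> ?Q ` D"
      then obtain d where "x \<in> S" "x = ?Q d" by auto
      then have "x = P (?Q d)" using P(3) by simp
      then show "x \<in> {0}" using PQ by simp
    qed
    have P0: "P 0 = 0" by (rule VP.linear_0[OF P(1)])
    then have "0 \<in> S" using P(2)[of 0] by simp
    moreover have "0 \<in> ?Q ` D"
      using P0 V.subspace_0[OF D(1)] by (intro image_eqI[of 0 _ 0]) simp_all
    ultimately show "{0} \<subseteq> S \<inter> ?Q ` D" by simp
  qed
  show "D = {x + y | x y. x \<in> S \<and> y \<in> ?Q ` D}"
  proof
    show "D \<subseteq> {x + y | x y. x \<in> S \<and> y \<in> ?Q ` D}"
    proof
      fix d assume "d \<in> D"
      moreover have "d = P d + ?Q d" by simp
      ultimately show "d \<in> {x + y | x y. x \<in> S \<and> y \<in> ?Q ` D}"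
        using P(2) by blast
    qed
    show "{x + y | x y. x \<in> S \<and> y \<in> ?Q ` D} \<subseteq> D"
      using V.subspace_add[OF D(1)] QD D(2) by blast
  qed
qed

definition supported_on :: "'i set \<Rightarrow> ('i \<Rightarrow> 'k::zero) set" where
  "supported_on B = {h. supp h \<subseteq> B}"

lemma supported_onD: "h \<in> supported_on B \<Longrightarrow> h i \<noteq> 0 \<Longrightarrow> i \<in> B"
  by (auto simp: supported_on_def supp_def)

lemma supported_on_outside: "h \<in> supported_on B \<Longrightarrow> i \<notin> B \<Longrightarrow> h i = 0"
  by (auto simp: supported_on_def supp_def)

lemma bvec_supported_on: "i \<in> B \<Longrightarrow> bvec i \<in> supported_on B"
  by (auto simp: supported_on_def supp_def bvec_def)

lemma subspace_supported_on: "V.subspace (supported_on B)"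
  unfolding V.subspace_def supported_on_def supp_def
  by (auto simp: subset_iff; metis add.left_neutral)

lemma supported_on_expand:
  fixes h :: "'i \<Rightarrow> 'k::field"
  assumes "finite B" "h \<in> supported_on B"
  shows "h = (\<Sum>i\<in>B. fscale (h i) (bvec i))"
proof
  fix j
  have "(\<Sum>i\<in>B. h i * bvec i j) = (\<Sum>i\<in>B. if i = j then h j else 0)"
    by (rule sum.cong) (auto simp: bvec_def)
  then show "h j = (\<Sum>i\<in>B. fscale (h i) (bvec i)) j"
    using assms supported_on_outside[of h B j] by (simp add: sum_fun_apply sum.delta')
qed

lemma span_bvec:
  assumes "finite B"
  shows "V.span (bvec ` B) = (supported_on B :: ('i \<Rightarrow> 'k::field) set)"
proof
  show "V.span (bvec ` B) \<subseteq> supported_on B"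
    by (rule V.span_minimal) (auto intro: bvec_supported_on subspace_supported_on)
  show "supported_on B \<subseteq> (V.span (bvec ` B) :: ('i \<Rightarrow> 'k) set)"
  proof
    fix h :: "'i \<Rightarrow> 'k" assume "h \<in> supported_on B"
    then have "h = (\<Sum>i\<in>B. fscale (h i) (bvec i))"
      by (rule supported_on_expand[OF assms])
    also have "\<dots> \<in> V.span (bvec ` B)"
      by (intro V.span_sum V.span_scale V.span_base) auto
    finally show "h \<in> V.span (bvec ` B)" .
  qed
qed

lemma span_Union_insert:
  assumes "V.subspace S"
  shows "V.span (\<Union>(insert S \<S>)) = {x + y | x y. x \<in> S \<and> y \<in> V.span (\<Union>\<S>)}"
proof -
  have spanS: "V.span S = S" using assms by simp
  show ?thesis by (simp add: V.span_Un spanS)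
qed

lemma direct_sum_insert:
  assumes S: "V.subspace S" "S \<noteq> {0}" and SE: "S \<inter> V.span (\<Union>\<S>) = {0}"
    and indep: "\<forall>T\<in>\<S>. T \<inter> V.span (\<Union>(\<S> - {T})) = {0}"
  shows "\<forall>T\<in>insert S \<S>. T \<inter> V.span (\<Union>(insert S \<S> - {T})) = {0}"
proof -
  let ?E = "V.span (\<Union>\<S>)"
  have spanS: "V.span S = S" using S(1) by simp
  have notin: "S \<notin> \<S>"
  proof
    assume "S \<in> \<S>"
    then have "S \<subseteq> ?E" by (auto intro: V.span_base)
    then show False using SE S(2) by auto
  qed
  show ?thesis
  proof
    fix T assume "T \<in> insert S \<S>"
    then consider "T = S" | "T \<in> \<S>" "T \<noteq> S" by auto
    then show "T \<inter> V.span (\<Union>(insert S \<S> - {T})) = {0}"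
    proof cases
      case 1
      then show ?thesis using SE notin by (simp add: insert_Diff_if)
    next
      case 2
      have TE: "T \<subseteq> ?E" using 2(1) by (auto intro: V.span_base)
      have sub: "V.span (\<Union>(\<S> - {T})) \<subseteq> ?E" by (rule V.span_mono) auto
      have "t = 0" if t: "t \<in> T" "t \<in> V.span (\<Union>(insert S \<S> - {T}))" for t
      proof -
        have "insert S \<S> - {T} = insert S (\<S> - {T})" using 2 by auto
        then obtain x y where xy: "t = x + y" "x \<in> S" "y \<in> V.span (\<Union>(\<S> - {T}))"
          using t(2) by (auto simp: V.span_Un spanS)
        have "x = t - y" using xy(1) by simp
        then have "x \<in> ?E"
          using V.span_diff[of t "\<Union>\<S>" y] TE t(1) sub xy(3) by auto
        then have "x = 0" using SE xy(2) by auto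
        then show "t = 0" using indep 2(1) t(1) xy by auto
      qed
      moreover have "0 \<in> T"
        using indep 2(1) by blast
      then have "0 \<in> T \<inter> V.span (\<Union>(insert S \<S> - {T}))"
        by (simp add: V.span_zero)
      ultimately show ?thesis by blast
    qed
  qed
qed

lemma tensor_span_slices:
  assumes D: "V.subspace D" and T: "T \<in> V.span {tensor x y | x y. x \<in> D \<and> y \<in> D}"
  shows "(\<lambda>i. T (i, j)) \<in> D" "(\<lambda>j. T (i, j)) \<in> D"
proof -
  from T obtain t r where t: "finite t" "t \<subseteq> {tensor x y | x y. x \<in> D \<and> y \<in> D}"
    "T = (\<Sum>a\<in>t. fscale (r a) a)"
    unfolding V.span_explicit by auto
  have "(\<lambda>i. T (i, j)) = (\<Sum>a\<in>t. fscale (r a) (\<lambda>i. a (i, j)))"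
    "(\<lambda>j. T (i, j)) = (\<Sum>a\<in>t. fscale (r a) (\<lambda>j. a (i, j)))"
    using t(3) by (auto simp: fun_eq_iff sum_fun_apply)
  moreover have "(\<lambda>i. a (i, j)) \<in> D" "(\<lambda>j. a (i, j)) \<in> D" if "a \<in> t" for a
  proof -
    obtain x y where a: "a = tensor x y" "x \<in> D" "y \<in> D" using t(2) \<open>a \<in> t\<close> by auto
    have "(\<lambda>i. a (i, j)) = fscale (y j) x" "(\<lambda>j. a (i, j)) = fscale (x i) y"
      by (auto simp: a tensor_def fun_eq_iff mult.commute)
    then show "(\<lambda>i. a (i, j)) \<in> D" "(\<lambda>j. a (i, j)) \<in> D"
      using V.subspace_scale[OF D] a by auto
  qed
  ultimately show "(\<lambda>i. T (i, j)) \<in> D" "(\<lambda>j. T (i, j)) \<in> D"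
    by (auto intro!: V.subspace_sum[OF D] V.subspace_scale[OF D])
qed

lemma tensor_expand:
  fixes T :: "'i \<times> 'i \<Rightarrow> 'k::field"
  assumes "finite B" and "T \<in> supported_on (B \<times> B)"
  shows "T = (\<Sum>p\<in>B \<times> B. fscale (T p) (tensor (bvec (fst p)) (bvec (snd p))))"
proof -
  have "tensor (bvec (fst p)) (bvec (snd p)) = (bvec p :: 'i \<times> 'i \<Rightarrow> 'k)" for p
    by (cases p) (auto simp: tensor_def bvec_def fun_eq_iff)
  then show ?thesis
    using supported_on_expand[OF _ assms(2)] assms(1) by simp
qed

definition map_fst :: "(('i \<Rightarrow> 'k) \<Rightarrow> 'i \<Rightarrow> 'k) \<Rightarrow> ('i \<times> 'j \<Rightarrow> 'k) \<Rightarrow> 'i \<times> 'j \<Rightarrow> 'k" where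
  "map_fst Q T = (\<lambda>(i, j). Q (\<lambda>i'. T (i', j)) i)"

definition map_snd :: "(('j \<Rightarrow> 'k) \<Rightarrow> 'j \<Rightarrow> 'k) \<Rightarrow> ('i \<times> 'j \<Rightarrow> 'k) \<Rightarrow> 'i \<times> 'j \<Rightarrow> 'k" where
  "map_snd Q T = (\<lambda>(i, j). Q (\<lambda>j'. T (i, j')) j)"

lemma flinear_map_fst: "flinear Q \<Longrightarrow> flinear (map_fst Q)"
proof (rule flinearI)
  assume Q: "flinear Q"
  show "map_fst Q (T1 + T2) = map_fst Q T1 + map_fst Q T2" for T1 T2
    using VP.linear_add[OF Q, of "\<lambda>i'. T1 (i', _)" "\<lambda>i'. T2 (i', _)"]
    by (auto simp: map_fst_def fun_eq_iff plus_fun_def)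
  show "map_fst Q (fscale c T) = fscale c (map_fst Q T)" for c T
    using VP.linear_scale[OF Q, of c "\<lambda>i'. T (i', _)"]
    by (auto simp: map_fst_def fun_eq_iff fscale_def)
qed

lemma flinear_map_snd: "flinear Q \<Longrightarrow> flinear (map_snd Q)"
proof (rule flinearI)
  assume Q: "flinear Q"
  show "map_snd Q (T1 + T2) = map_snd Q T1 + map_snd Q T2" for T1 T2
    using VP.linear_add[OF Q, of "\<lambda>j'. T1 (_, j')" "\<lambda>j'. T2 (_, j')"]
    by (auto simp: map_snd_def fun_eq_iff plus_fun_def)
  show "map_snd Q (fscale c T) = fscale c (map_snd Q T)" for c T
    using VP.linear_scale[OF Q, of c "\<lambda>j'. T (_, j')"]
    by (auto simp: map_snd_def fun_eq_iff fscale_def)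
qed

lemma map_snd_tensor: "flinear Q \<Longrightarrow> map_snd Q (tensor x y) = tensor x (Q y)"
  using VP.linear_scale[of Q "x _" y]
  by (auto simp: map_snd_def tensor_def fun_eq_iff fscale_def)

lemma map_fst_tensor: "flinear Q \<Longrightarrow> map_fst Q (tensor x y) = tensor (Q x) y"
proof -
  assume Q: "flinear Q"
  have slice: "(\<lambda>i'. x i' * y j) = fscale (y j) x" for j
    by (simp add: fun_eq_iff mult.commute)
  show ?thesis
    using VP.linear_scale[OF Q]
    by (auto simp: map_fst_def tensor_def fun_eq_iff mult.commute slice)
qed


context matched_pair
begin

lemma lact_one_F [simp]: "g \<in> carrier G \<Longrightarrow> lact g \<one>\<^bsub>F\<^esub> = \<one>\<^bsub>F\<^esub>"
  using mp_lact[OF _ F.one_closed F.one_closed, of g] ract_one[of g] lact_closed[of g]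
  by (metis F.l_cancel_one' F.one_closed F.r_one)

lemma lact_inv_lact: "g \<in> carrier G \<Longrightarrow> h \<in> carrier F \<Longrightarrow> lact (inv\<^bsub>G\<^esub> g) (lact g h) = h"
  by (metis G.inv_closed G.l_inv lact_mult lact_one)

lemma lact_lact_inv: "g \<in> carrier G \<Longrightarrow> h \<in> carrier F \<Longrightarrow> lact g (lact (inv\<^bsub>G\<^esub> g) h) = h"
  by (metis G.inv_closed G.r_inv lact_mult lact_one)

lemma ract_ract_inv: "g \<in> carrier G \<Longrightarrow> h \<in> carrier F \<Longrightarrow> ract (ract g h) (inv\<^bsub>F\<^esub> h) = g"
  by (metis F.inv_closed F.r_inv ract_mult ract_one)

lemma inv_lact:
  assumes g: "g \<in> carrier G" and h: "h \<in> carrier F"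
  shows "inv\<^bsub>F\<^esub> (lact g h) = lact (ract g h) (inv\<^bsub>F\<^esub> h)"
proof -
  have "lact g h \<otimes>\<^bsub>F\<^esub> lact (ract g h) (inv\<^bsub>F\<^esub> h) = \<one>\<^bsub>F\<^esub>"
    using mp_lact[OF g h F.inv_closed[OF h]] g h by simp
  then show ?thesis
    using F.inv_equality F.inv_inv lact_closed ract_closed g h F.inv_closed by metis
qed

lemma tau_one_left [simp]: "g \<in> carrier G \<Longrightarrow> h \<in> carrier F \<Longrightarrow> \<tau> \<one>\<^bsub>G\<^esub> g h = 1"
  using tau_norm[of g g h] by simp

lemma tau_one_right [simp]: "g \<in> carrier G \<Longrightarrow> h \<in> carrier F \<Longrightarrow> \<tau> g \<one>\<^bsub>G\<^esub> h = 1"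
  using tau_norm[of g g h] by simp

lemma G_mult_inv_eq_iff:
  "g \<in> carrier G \<Longrightarrow> y \<in> carrier G \<Longrightarrow> g \<otimes>\<^bsub>G\<^esub> inv\<^bsub>G\<^esub> y = a \<longleftrightarrow> a \<in> carrier G \<and> g = a \<otimes>\<^bsub>G\<^esub> y"
  by (metis G.inv_closed G.inv_solve_right G.m_closed)

lemma sum_G_reindex_left:
  "c \<in> carrier G \<Longrightarrow> (\<Sum>b\<in>carrier G. P b) = (\<Sum>a\<in>carrier G. P (c \<otimes>\<^bsub>G\<^esub> a))"
  by (rule sum.reindex_bij_witness[of _ "\<lambda>a. c \<otimes>\<^bsub>G\<^esub> a" "\<lambda>b. inv\<^bsub>G\<^esub> c \<otimes>\<^bsub>G\<^esub> b"])
     (auto simp: G.m_assoc[symmetric])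

lemma sum_G_reindex_right:
  "c \<in> carrier G \<Longrightarrow> (\<Sum>b\<in>carrier G. P b) = (\<Sum>a\<in>carrier G. P (a \<otimes>\<^bsub>G\<^esub> c))"
  by (rule sum.reindex_bij_witness[of _ "\<lambda>a. a \<otimes>\<^bsub>G\<^esub> c" "\<lambda>b. b \<otimes>\<^bsub>G\<^esub> inv\<^bsub>G\<^esub> c"])
     (auto simp: G.m_assoc)

definition orbit :: "'f \<Rightarrow> 'f set" where
  "orbit f = (\<lambda>g. lact g f) ` carrier G"

definition C_index :: "'f \<Rightarrow> ('g \<times> 'f) set" where
  "C_index f = carrier G \<times> orbit f"

abbreviation C :: "'f \<Rightarrow> ('g \<times> 'f \<Rightarrow> 'k) set" where
  "C f \<equiv> supported_on (C_index f)"

lemma finite_orbit: "finite (orbit f)"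
  by (simp add: orbit_def G_finite)

lemma finite_C_index: "finite (C_index f)"
  by (simp add: C_index_def G_finite finite_orbit)

lemma orbit_one: "orbit \<one>\<^bsub>F\<^esub> = {\<one>\<^bsub>F\<^esub>}"
  using G.one_closed by (auto simp: orbit_def)

lemma lact_in_orbit: "h \<in> orbit f \<Longrightarrow> x \<in> carrier G \<Longrightarrow> f \<in> carrier F \<Longrightarrow> lact x h \<in> orbit f"
  by (auto simp: orbit_def lact_mult[symmetric] intro!: imageI)

lemma self_in_orbit: "f \<in> carrier F \<Longrightarrow> f \<in> orbit f"
  by (auto simp: orbit_def lact_one intro!: image_eqI[where x="\<one>\<^bsub>G\<^esub>"])

context
  fixes f assumes f: "f \<in> carrier F"
begin

lemma orbit_subset: "orbit f \<subseteq> carrier F"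
  using f by (auto simp: orbit_def lact_closed)

lemma C_index_subset: "C_index f \<subseteq> carrier G \<times> carrier F"
  using orbit_subset by (auto simp: C_index_def)

lemma Csub_eq_C: "Csub F G lact f = C f"
proof -
  have "{bvec (g, lact g' f) | g g'. g \<in> carrier G \<and> g' \<in> carrier G}
      = (bvec ` C_index f :: ('g \<times> 'f \<Rightarrow> 'k) set)"
    by (auto simp: C_index_def orbit_def)
  then show ?thesis
    unfolding Csub_def lspan_eq_span by (simp add: span_bvec[OF finite_C_index])
qed

lemma C_subset_Hspace: "C f \<subseteq> Hspace F G"
  using C_index_subset finite_C_index
  by (auto simp: Hspace_def fin_fun_def supported_on_def intro: finite_subset)

lemma C_outside_carrier: "c \<in> C f \<Longrightarrow> m \<notin> carrier F \<Longrightarrow> c (g, m) = 0"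
  using C_index_subset by (auto intro: supported_on_outside)

end

end


section \<open>The hit actions of the dual basis\<close>

context matched_pair
begin

text \<open>For the dual basis \<open>e\<^sub>i\<close> of the \<open>p\<^sub>g # f\<close>:
  \<open>rhit j c = c \<leftharpoonup> e\<^sub>j = (id \<otimes> e\<^sub>j) (\<Delta> c)\<close> and \<open>lhit i c = e\<^sub>i \<rightharpoonup> c = (e\<^sub>i \<otimes> id) (\<Delta> c)\<close>.\<close>

definition rhit :: "'g \<times> 'f \<Rightarrow> ('g \<times> 'f \<Rightarrow> 'k) \<Rightarrow> 'g \<times> 'f \<Rightarrow> 'k" where
  "rhit j c = (\<lambda>i. if fst i \<in> carrier G \<and> fst j \<in> carrier G \<and> snd i = lact (fst j) (snd j)
      then \<tau> (fst i) (fst j) (snd j) * c (fst i \<otimes>\<^bsub>G\<^esub> fst j, snd j) else 0)"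

definition lhit :: "'g \<times> 'f \<Rightarrow> ('g \<times> 'f \<Rightarrow> 'k) \<Rightarrow> 'g \<times> 'f \<Rightarrow> 'k" where
  "lhit i c = (\<lambda>j. rhit j c i)"

lemma Hcomul_apply:
  assumes c: "c \<in> Hspace F G"
  shows "Hcomul F G lact \<tau> c (i, j) = rhit j c i"
proof -
  obtain a k y m where ij: "i = (a, k)" "j = (y, m)" by (cases i, cases j)
  have fin: "finite (supp c)" and sub: "supp c \<subseteq> carrier G \<times> carrier F"
    using c by (auto simp: Hspace_def fin_fun_def)
  have inner: "(\<Sum>x\<in>carrier G. \<tau> (fst q \<otimes>\<^bsub>G\<^esub> inv\<^bsub>G\<^esub> x) x (snd q) *
        tensor (bvec (fst q \<otimes>\<^bsub>G\<^esub> inv\<^bsub>G\<^esub> x, lact x (snd q))) (bvec (x, snd q)) (i, j))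
      = (if q = (a \<otimes>\<^bsub>G\<^esub> y, m) \<and> a \<in> carrier G \<and> y \<in> carrier G \<and> k = lact y m
         then \<tau> a y m else 0)" if q: "q \<in> supp c" for q
  proof -
    have gq: "fst q \<in> carrier G" using q sub by auto
    have "(\<Sum>x\<in>carrier G. \<tau> (fst q \<otimes>\<^bsub>G\<^esub> inv\<^bsub>G\<^esub> x) x (snd q) *
        tensor (bvec (fst q \<otimes>\<^bsub>G\<^esub> inv\<^bsub>G\<^esub> x, lact x (snd q))) (bvec (x, snd q)) (i, j))
      = (\<Sum>x\<in>carrier G. if x = y then (if snd q = m \<and> fst q \<otimes>\<^bsub>G\<^esub> inv\<^bsub>G\<^esub> y = a \<and> lact y m = k
           then \<tau> (fst q \<otimes>\<^bsub>G\<^esub> inv\<^bsub>G\<^esub> y) y m else 0) else 0)"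
      by (rule sum.cong) (auto simp: tensor_def bvec_def ij)
    then show ?thesis
      using G_mult_inv_eq_iff[OF gq] by (cases q) (auto simp: sum.delta' G_finite)
  qed
  have "Hcomul F G lact \<tau> c (i, j) = (\<Sum>q\<in>supp c. c q * (\<Sum>x\<in>carrier G.
      \<tau> (fst q \<otimes>\<^bsub>G\<^esub> inv\<^bsub>G\<^esub> x) x (snd q) *
      tensor (bvec (fst q \<otimes>\<^bsub>G\<^esub> inv\<^bsub>G\<^esub> x, lact x (snd q))) (bvec (x, snd q)) (i, j)))"
    unfolding Hcomul_def lin_ext_def by (simp add: case_prod_beta)
  also have "\<dots> = (\<Sum>q\<in>supp c. if q = (a \<otimes>\<^bsub>G\<^esub> y, m) then
      (if a \<in> carrier G \<and> y \<in> carrier G \<and> k = lact y m then c q * \<tau> a y m else 0) else 0)"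
    by (rule sum.cong) (auto simp: inner)
  also have "\<dots> = rhit j c i"
    using fin by (auto simp: sum.delta' rhit_def ij supp_def)
  finally show ?thesis .
qed

lemma subcoalgebra_hit_closed:
  assumes "subcoalgebra (Hspace F G) (Hcomul F G lact \<tau>) D" "d \<in> D"
  shows "rhit j d \<in> D" "lhit i d \<in> D"
proof -
  have D: "V.subspace D" "d \<in> Hspace F G"
    and T: "Hcomul F G lact \<tau> d \<in> V.span {tensor x y | x y. x \<in> D \<and> y \<in> D}"
    using assms unfolding subcoalgebra_def lsubspace_eq_subspace lspan_eq_span by auto
  show "rhit j d \<in> D" "lhit i d \<in> D"
    using tensor_span_slices[OF D(1) T] by (simp_all add: Hcomul_apply[OF D(2)] lhit_def)
qed

lemma flinear_rhit: "flinear (rhit j)"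
  by (rule flinearI) (auto simp: rhit_def fun_eq_iff algebra_simps)

lemma flinear_lhit: "flinear (lhit i)"
  by (rule flinearI) (auto simp: lhit_def rhit_def fun_eq_iff algebra_simps)

lemma rhit_rhit:
  assumes x: "x \<in> carrier G" and y: "y \<in> carrier G" and m': "m' \<in> carrier F"
  shows "rhit (x, m) (rhit (y, m') c) =
    fscale (if m = lact y m' then \<tau> x y m' else 0) (rhit (x \<otimes>\<^bsub>G\<^esub> y, m') c)"
proof
  fix i :: "'g \<times> 'f"
  obtain b n where i: "i = (b, n)" by (cases i)
  show "rhit (x, m) (rhit (y, m') c) i
    = fscale (if m = lact y m' then \<tau> x y m' else 0) (rhit (x \<otimes>\<^bsub>G\<^esub> y, m') c) i"
  proof (cases "b \<in> carrier G \<and> m = lact y m' \<and> n = lact x m")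
    case True
    have "\<tau> b x (lact y m') * \<tau> (b \<otimes>\<^bsub>G\<^esub> x) y m' = \<tau> x y m' * \<tau> b (x \<otimes>\<^bsub>G\<^esub> y) m'"
      using tau_cocycle[of b x y m'] True assms by (simp add: mult.commute)
    then show ?thesis
      using True assms by (simp add: rhit_def i G.m_assoc lact_mult mult.assoc[symmetric])
  qed (use assms in \<open>auto simp: rhit_def i lact_mult\<close>)
qed

context
  fixes f assumes f: "f \<in> carrier F"
begin

lemma lhit_lhit:
  assumes a: "a \<in> carrier G" and a': "a' \<in> carrier G" and k: "k \<in> carrier F" and c: "c \<in> C f"
  shows "lhit (a, k) (lhit (a', k') c) =
    fscale (if k' = lact a k then \<tau> a' a k else 0) (lhit (a' \<otimes>\<^bsub>G\<^esub> a, k) c)"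
proof
  fix j :: "'g \<times> 'f"
  obtain x m where j: "j = (x, m)" by (cases j)
  show "lhit (a, k) (lhit (a', k') c) j
    = fscale (if k' = lact a k then \<tau> a' a k else 0) (lhit (a' \<otimes>\<^bsub>G\<^esub> a, k) c) j"
  proof (cases "m \<in> carrier F \<and> x \<in> carrier G \<and> k = lact x m \<and> k' = lact a k")
    case True
    have "\<tau> a x m * \<tau> a' (a \<otimes>\<^bsub>G\<^esub> x) m = \<tau> (a' \<otimes>\<^bsub>G\<^esub> a) x m * \<tau> a' a (lact x m)"
      using tau_cocycle[of a' a x m] True assms by (simp add: mult.commute)
    then show ?thesis
      using True assms by (simp add: lhit_def rhit_def j G.m_assoc lact_mult mult.assoc[symmetric])
  next
    case False
    then show ?thesis
      using assms C_outside_carrier[OF f c]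
      by (cases "m \<in> carrier F") (auto simp: lhit_def rhit_def j lact_mult)
  qed
qed

lemma rhit_lhit_commute:
  assumes c: "c \<in> C f"
  shows "rhit j (lhit i c) = lhit i (rhit j c)"
proof
  fix q :: "'g \<times> 'f"
  obtain b n where q: "q = (b, n)" by (cases q)
  obtain x m where j: "j = (x, m)" by (cases j)
  obtain a k where i: "i = (a, k)" by (cases i)
  show "rhit j (lhit i c) q = lhit i (rhit j c) q"
  proof (cases "m \<in> carrier F \<and> x \<in> carrier G \<and> a \<in> carrier G \<and> b \<in> carrier G
      \<and> n = lact x m \<and> k = lact b n")
    case True
    have "\<tau> b x m * \<tau> a (b \<otimes>\<^bsub>G\<^esub> x) m = \<tau> (a \<otimes>\<^bsub>G\<^esub> b) x m * \<tau> a b (lact x m)"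
      using tau_cocycle[of a b x m] True by (simp add: mult.commute)
    then show ?thesis
      using True by (simp add: lhit_def rhit_def j i q G.m_assoc lact_mult mult.assoc[symmetric])
  next
    case False
    then show ?thesis
      using C_outside_carrier[OF f c]
      by (cases "m \<in> carrier F") (auto simp: lhit_def rhit_def j i q lact_mult)
  qed
qed

lemma sum_rhit_one:
  assumes c: "c \<in> C f"
  shows "(\<Sum>h\<in>orbit f. rhit (\<one>\<^bsub>G\<^esub>, h) c) = c"
proof
  fix q :: "'g \<times> 'f"
  obtain b n where q: "q = (b, n)" by (cases q)
  have "(\<Sum>h\<in>orbit f. rhit (\<one>\<^bsub>G\<^esub>, h) c) q
      = (\<Sum>h\<in>orbit f. if h = n then (if b \<in> carrier G then c (b, n) else 0) else 0)"
    unfolding sum_fun_apply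
    by (rule sum.cong) (use orbit_subset[OF f] in \<open>auto simp: rhit_def q lact_one\<close>)
  also have "\<dots> = c q"
    using supported_on_outside[OF c, of q] by (auto simp: sum.delta' finite_orbit q C_index_def)
  finally show "(\<Sum>h\<in>orbit f. rhit (\<one>\<^bsub>G\<^esub>, h) c) q = c q" .
qed

lemma sum_lhit_one:
  assumes c: "c \<in> C f"
  shows "(\<Sum>k\<in>orbit f. lhit (\<one>\<^bsub>G\<^esub>, k) c) = c"
proof
  fix q :: "'g \<times> 'f"
  obtain x m where q: "q = (x, m)" by (cases q)
  have "(\<Sum>k\<in>orbit f. lhit (\<one>\<^bsub>G\<^esub>, k) c) q
      = (\<Sum>k\<in>orbit f. if k = lact x m then (if x \<in> carrier G then c (x, m) else 0) else 0)"
    unfolding sum_fun_apply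
    using C_outside_carrier[OF f c]
    by (intro sum.cong refl, cases "m \<in> carrier F") (auto simp: lhit_def rhit_def q)
  also have "\<dots> = c q"
    using supported_on_outside[OF c, of q] lact_in_orbit[OF _ _ f]
    by (auto simp: sum.delta' finite_orbit q C_index_def)
  finally show "(\<Sum>k\<in>orbit f. lhit (\<one>\<^bsub>G\<^esub>, k) c) q = c q" .
qed

lemma rhit_in_C: "x \<in> carrier G \<Longrightarrow> lact x m \<in> orbit f \<Longrightarrow> rhit (x, m) c \<in> C f"
  by (auto simp: supported_on_def supp_def rhit_def C_index_def split: if_splits)

lemma rhit_C: "c \<in> C f \<Longrightarrow> rhit j c \<in> C f"
  using lact_in_orbit[OF _ _ f]
  by (auto simp: supported_on_def supp_def rhit_def C_index_def split: if_splits)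

lemma lhit_C: "c \<in> C f \<Longrightarrow> lhit i c \<in> C f"
  by (auto simp: supported_on_def supp_def lhit_def rhit_def C_index_def split: if_splits)

lemma rhit_outside: "c \<in> C f \<Longrightarrow> j \<notin> C_index f \<Longrightarrow> rhit j c = 0"
proof
  fix q
  assume "c \<in> C f" "j \<notin> C_index f"
  then show "rhit j c q = 0 q"
    using supported_onD[of c "C_index f" "(fst q \<otimes>\<^bsub>G\<^esub> fst j, snd j)"]
    by (auto simp: rhit_def C_index_def mem_Times_iff)
qed

lemma lhit_outside: "c \<in> C f \<Longrightarrow> i \<notin> C_index f \<Longrightarrow> lhit i c = 0"
proof
  fix q
  assume "c \<in> C f" "i \<notin> C_index f"
  then show "lhit i c q = 0 q"
    using supported_onD[of c "C_index f" "(fst i \<otimes>\<^bsub>G\<^esub> fst q, snd q)"] lact_in_orbit[OF _ _ f]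
    by (auto simp: lhit_def rhit_def C_index_def mem_Times_iff)
qed

lemma Hcomul_C:
  assumes c: "c \<in> C f"
  shows "Hcomul F G lact \<tau> c \<in> supported_on (C_index f \<times> C_index f)"
  unfolding supported_on_def
proof (intro CollectI subsetI)
  fix p assume "p \<in> supp (Hcomul F G lact \<tau> c)"
  moreover obtain i j where p: "p = (i, j)" by (cases p)
  ultimately have nz: "rhit j c i \<noteq> 0"
    using C_subset_Hspace[OF f] c by (auto simp: supp_def Hcomul_apply)
  then have "j \<in> C_index f"
    using rhit_outside[OF c] by (metis zero_fun_def)
  moreover have "i \<in> C_index f"
    using supported_onD[OF rhit_C[OF c] nz] .
  ultimately show "p \<in> C_index f \<times> C_index f"
    by (simp add: p)
qed

lemma C_subcoalgebra: "subcoalgebra (Hspace F G) (Hcomul F G lact \<tau>) (C f)"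
  unfolding subcoalgebra_def lsubspace_eq_subspace lspan_eq_span
proof (intro conjI ballI C_subset_Hspace[OF f] subspace_supported_on)
  fix d assume d: "d \<in> C f"
  have "Hcomul F G lact \<tau> d = (\<Sum>p\<in>C_index f \<times> C_index f.
      fscale (Hcomul F G lact \<tau> d p) (tensor (bvec (fst p)) (bvec (snd p))))"
    by (rule tensor_expand[OF finite_C_index Hcomul_C[OF d]])
  also have "\<dots> \<in> V.span {tensor x y |x y. x \<in> C f \<and> y \<in> C f}"
  proof (intro V.span_sum V.span_scale V.span_base)
    fix p assume "p \<in> C_index f \<times> C_index f"
    then have "bvec (fst p) \<in> C f" "bvec (snd p) \<in> C f"
      by (auto intro: bvec_supported_on)
    then show "tensor (bvec (fst p)) (bvec (snd p)) \<in> {tensor x y |x y. x \<in> C f \<and> y \<in> C f}"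
      by blast
  qed
  finally show "Hcomul F G lact \<tau> d \<in> V.span {tensor x y |x y. x \<in> C f \<and> y \<in> C f}" .
qed

end

end


section \<open>Maschke averaging\<close>

context matched_pair
begin

lemma tau_inv_swap:
  "g \<in> carrier G \<Longrightarrow> x \<in> carrier F \<Longrightarrow> \<tau> g (inv\<^bsub>G\<^esub> g) (lact g x) = \<tau> (inv\<^bsub>G\<^esub> g) g x"
  using tau_cocycle[of g "inv\<^bsub>G\<^esub> g" g x] by simp

lemma tau_weight_shift_left:
  assumes c: "c \<in> carrier G" and a: "a \<in> carrier G" and k: "k \<in> carrier F"
  shows "inverse (\<tau> a (inv\<^bsub>G\<^esub> a) k) * \<tau> c a (lact (inv\<^bsub>G\<^esub> a) k)
    = inverse (\<tau> (c \<otimes>\<^bsub>G\<^esub> a) (inv\<^bsub>G\<^esub> (c \<otimes>\<^bsub>G\<^esub> a)) (lact c k)) * \<tau> (inv\<^bsub>G\<^esub> (c \<otimes>\<^bsub>G\<^esub> a)) c k"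
proof -
  define h where "h = lact (inv\<^bsub>G\<^esub> a) k"
  have h: "h \<in> carrier F" "k = lact a h"
    using assms lact_closed lact_lact_inv by (auto simp: h_def)
  have ca: "c \<otimes>\<^bsub>G\<^esub> a \<in> carrier G" using assms by simp
  have "inv\<^bsub>G\<^esub> (c \<otimes>\<^bsub>G\<^esub> a) \<otimes>\<^bsub>G\<^esub> c = inv\<^bsub>G\<^esub> a"
    using c a by (simp add: G.inv_mult_group G.m_assoc)
  then have cocycle: "\<tau> c a h * \<tau> (inv\<^bsub>G\<^esub> (c \<otimes>\<^bsub>G\<^esub> a)) (c \<otimes>\<^bsub>G\<^esub> a) h
      = \<tau> (inv\<^bsub>G\<^esub> (c \<otimes>\<^bsub>G\<^esub> a)) c (lact a h) * \<tau> (inv\<^bsub>G\<^esub> a) a h"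
    using tau_cocycle[of "inv\<^bsub>G\<^esub> (c \<otimes>\<^bsub>G\<^esub> a)" c a h] assms h by (simp add: mult.commute)
  have "\<tau> a (inv\<^bsub>G\<^esub> a) k = \<tau> (inv\<^bsub>G\<^esub> a) a h"
    "\<tau> (c \<otimes>\<^bsub>G\<^esub> a) (inv\<^bsub>G\<^esub> (c \<otimes>\<^bsub>G\<^esub> a)) (lact c k) = \<tau> (inv\<^bsub>G\<^esub> (c \<otimes>\<^bsub>G\<^esub> a)) (c \<otimes>\<^bsub>G\<^esub> a) h"
    using tau_inv_swap[OF a h(1)] tau_inv_swap[OF ca h(1)] h assms by (simp_all add: lact_mult)
  moreover have "\<tau> (inv\<^bsub>G\<^esub> a) a h \<noteq> 0" "\<tau> (inv\<^bsub>G\<^esub> (c \<otimes>\<^bsub>G\<^esub> a)) (c \<otimes>\<^bsub>G\<^esub> a) h \<noteq> 0"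
    using tau_nonzero assms h ca by auto
  ultimately show ?thesis
    unfolding h_def[symmetric] using cocycle h(2) by (simp add: field_simps)
qed

lemma tau_weight_shift_right:
  assumes a: "a \<in> carrier G" and c: "c \<in> carrier G" and k: "k \<in> carrier F"
  shows "inverse (\<tau> (inv\<^bsub>G\<^esub> a) a (lact c k)) * \<tau> a c k
    = inverse (\<tau> (inv\<^bsub>G\<^esub> (a \<otimes>\<^bsub>G\<^esub> c)) (a \<otimes>\<^bsub>G\<^esub> c) k)
      * \<tau> c (inv\<^bsub>G\<^esub> (a \<otimes>\<^bsub>G\<^esub> c)) (lact (a \<otimes>\<^bsub>G\<^esub> c) k)"
proof -
  have "c \<otimes>\<^bsub>G\<^esub> inv\<^bsub>G\<^esub> (a \<otimes>\<^bsub>G\<^esub> c) = inv\<^bsub>G\<^esub> a"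
    using c a by (simp add: G.inv_mult_group G.m_assoc[symmetric])
  then have "\<tau> c (inv\<^bsub>G\<^esub> (a \<otimes>\<^bsub>G\<^esub> c)) (lact (a \<otimes>\<^bsub>G\<^esub> c) k) * \<tau> (inv\<^bsub>G\<^esub> a) (a \<otimes>\<^bsub>G\<^esub> c) k
      = \<tau> (inv\<^bsub>G\<^esub> (a \<otimes>\<^bsub>G\<^esub> c)) (a \<otimes>\<^bsub>G\<^esub> c) k"
    using tau_cocycle[of c "inv\<^bsub>G\<^esub> (a \<otimes>\<^bsub>G\<^esub> c)" "a \<otimes>\<^bsub>G\<^esub> c" k] assms by simp
  moreover have "\<tau> (inv\<^bsub>G\<^esub> a) a (lact c k) = \<tau> (inv\<^bsub>G\<^esub> a) (a \<otimes>\<^bsub>G\<^esub> c) k * \<tau> a c k"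
    using tau_cocycle[of "inv\<^bsub>G\<^esub> a" a c k] assms by simp
  moreover have "\<tau> (inv\<^bsub>G\<^esub> a) a (lact c k) \<noteq> 0" "\<tau> (inv\<^bsub>G\<^esub> (a \<otimes>\<^bsub>G\<^esub> c)) (a \<otimes>\<^bsub>G\<^esub> c) k \<noteq> 0"
    using tau_nonzero assms lact_closed by auto
  ultimately show ?thesis
    by (simp add: field_simps)
qed

definition inv_card_G :: 'k where
  "inv_card_G = inverse (of_nat (card (carrier G)))"

text \<open>Averaging over a separability idempotent of the twisted groupoid algebra spanned by the
  \<open>rhit j\<close>; \<open>avg_lhit\<close> is the mirror image for the \<open>lhit i\<close>.\<close>

definition avg_rhit :: "'f \<Rightarrow> (('g \<times> 'f \<Rightarrow> 'k) \<Rightarrow> 'g \<times> 'f \<Rightarrow> 'k) \<Rightarrow> ('g \<times> 'f \<Rightarrow> 'k) \<Rightarrow> 'g \<times> 'f \<Rightarrow> 'k"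
  where "avg_rhit f X c = (\<Sum>a\<in>carrier G. \<Sum>h\<in>orbit f.
      fscale (inv_card_G * inverse (\<tau> a (inv\<^bsub>G\<^esub> a) h))
        (rhit (a, lact (inv\<^bsub>G\<^esub> a) h) (X (rhit (inv\<^bsub>G\<^esub> a, h) c))))"

definition avg_lhit :: "'f \<Rightarrow> (('g \<times> 'f \<Rightarrow> 'k) \<Rightarrow> 'g \<times> 'f \<Rightarrow> 'k) \<Rightarrow> ('g \<times> 'f \<Rightarrow> 'k) \<Rightarrow> 'g \<times> 'f \<Rightarrow> 'k"
  where "avg_lhit f X c = (\<Sum>a\<in>carrier G. \<Sum>k\<in>orbit f.
      fscale (inv_card_G * inverse (\<tau> (inv\<^bsub>G\<^esub> a) a k))
        (lhit (a, k) (X (lhit (inv\<^bsub>G\<^esub> a, lact a k) c))))"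

lemma flinear_avg_rhit: "flinear X \<Longrightarrow> flinear (avg_rhit f X)"
  unfolding avg_rhit_def
  by (intro VP.linear_compose_sum ballI VP.linear_compose_scale_right
      Vector_Spaces.linear_compose[OF flinear_rhit, unfolded comp_def]
      Vector_Spaces.linear_compose[OF _ flinear_rhit, unfolded comp_def])

lemma flinear_avg_lhit: "flinear X \<Longrightarrow> flinear (avg_lhit f X)"
  unfolding avg_lhit_def
  by (intro VP.linear_compose_sum ballI VP.linear_compose_scale_right
      Vector_Spaces.linear_compose[OF flinear_lhit, unfolded comp_def]
      Vector_Spaces.linear_compose[OF _ flinear_lhit, unfolded comp_def])

lemma avg_rhit_in:
  assumes "V.subspace S" "\<And>w. X w \<in> S" "\<And>j s. s \<in> S \<Longrightarrow> rhit j s \<in> S"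
  shows "avg_rhit f X c \<in> S"
  unfolding avg_rhit_def using assms by (intro V.subspace_sum V.subspace_scale) auto

lemma avg_lhit_in:
  assumes "V.subspace S" "\<And>w. X w \<in> S" "\<And>i s. s \<in> S \<Longrightarrow> lhit i s \<in> S"
  shows "avg_lhit f X c \<in> S"
  unfolding avg_lhit_def using assms by (intro V.subspace_sum V.subspace_scale) auto


context
  fixes f assumes f: "f \<in> carrier F"
begin

lemma avg_rhit_C: "avg_rhit f X c \<in> C f"
  unfolding avg_rhit_def
proof (intro V.subspace_sum[OF subspace_supported_on] V.subspace_scale[OF subspace_supported_on])
  fix a h assume "a \<in> carrier G" "h \<in> orbit f"
  then show "rhit (a, lact (inv\<^bsub>G\<^esub> a) h) (X (rhit (inv\<^bsub>G\<^esub> a, h) c)) \<in> C f"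
    using orbit_subset[OF f] lact_lact_inv by (intro rhit_in_C[OF f]) auto
qed

lemma avg_lhit_C:
  assumes "X ` C f \<subseteq> C f" "c \<in> C f"
  shows "avg_lhit f X c \<in> C f"
  unfolding avg_lhit_def
proof (intro V.subspace_sum[OF subspace_supported_on] V.subspace_scale[OF subspace_supported_on]
    lhit_C[OF f])
  show "X (lhit (inv\<^bsub>G\<^esub> a, lact a k) c) \<in> C f" for a k
    using assms lhit_C[OF f] by blast
qed

lemma sum_inv_card_G:
  "(of_nat (card (carrier G)) :: 'k) \<noteq> 0 \<Longrightarrow> (\<Sum>a\<in>carrier G. fscale inv_card_G s) = s"
  by (subst V.sum_constant_scale) (simp add: V.scale_scale inv_card_G_def)

lemma avg_rhit_id:
  assumes nG: "(of_nat (card (carrier G)) :: 'k) \<noteq> 0"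
    and S: "S \<subseteq> C f" "\<And>j s. s \<in> S \<Longrightarrow> rhit j s \<in> S" and X: "\<And>s. s \<in> S \<Longrightarrow> X s = s"
    and s: "s \<in> S"
  shows "avg_rhit f X s = s"
proof -
  have "avg_rhit f X s = (\<Sum>a\<in>carrier G. \<Sum>h\<in>orbit f. fscale inv_card_G (rhit (\<one>\<^bsub>G\<^esub>, h) s))"
    unfolding avg_rhit_def
  proof (intro sum.cong refl)
    fix a h assume a: "a \<in> carrier G" and "h \<in> orbit f"
    then have h: "h \<in> carrier F" using orbit_subset[OF f] by auto
    then have "\<tau> a (inv\<^bsub>G\<^esub> a) h \<noteq> 0" using tau_nonzero a by auto
    then show "fscale (inv_card_G * inverse (\<tau> a (inv\<^bsub>G\<^esub> a) h))
        (rhit (a, lact (inv\<^bsub>G\<^esub> a) h) (X (rhit (inv\<^bsub>G\<^esub> a, h) s)))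
      = fscale inv_card_G (rhit (\<one>\<^bsub>G\<^esub>, h) s)"
      using X[OF S(2)[OF s]] rhit_rhit[of a "inv\<^bsub>G\<^esub> a" h "lact (inv\<^bsub>G\<^esub> a) h" s] a h
      by (simp add: V.scale_scale)
  qed
  also have "\<dots> = (\<Sum>a\<in>carrier G. fscale inv_card_G s)"
    using s S(1) sum_rhit_one[OF f, of s] by (auto simp: V.scale_sum_right[symmetric])
  also have "\<dots> = s"
    by (rule sum_inv_card_G[OF nG])
  finally show ?thesis .
qed

lemma avg_lhit_id:
  assumes nG: "(of_nat (card (carrier G)) :: 'k) \<noteq> 0"
    and S: "S \<subseteq> C f" "\<And>i s. s \<in> S \<Longrightarrow> lhit i s \<in> S" and X: "\<And>s. s \<in> S \<Longrightarrow> X s = s"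
    and s: "s \<in> S"
  shows "avg_lhit f X s = s"
proof -
  have sC: "s \<in> C f" using S s by auto
  have "avg_lhit f X s = (\<Sum>a\<in>carrier G. \<Sum>k\<in>orbit f. fscale inv_card_G (lhit (\<one>\<^bsub>G\<^esub>, k) s))"
    unfolding avg_lhit_def
  proof (intro sum.cong refl)
    fix a k assume a: "a \<in> carrier G" and "k \<in> orbit f"
    then have k: "k \<in> carrier F" using orbit_subset[OF f] by auto
    then have "\<tau> (inv\<^bsub>G\<^esub> a) a k \<noteq> 0" using tau_nonzero a by auto
    then show "fscale (inv_card_G * inverse (\<tau> (inv\<^bsub>G\<^esub> a) a k))
        (lhit (a, k) (X (lhit (inv\<^bsub>G\<^esub> a, lact a k) s)))
      = fscale inv_card_G (lhit (\<one>\<^bsub>G\<^esub>, k) s)"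
      using X[OF S(2)[OF s]] lhit_lhit[OF f a _ k sC, where a'="inv\<^bsub>G\<^esub> a" and k'="lact a k"] a k
      by (simp add: V.scale_scale)
  qed
  also have "\<dots> = (\<Sum>a\<in>carrier G. fscale inv_card_G s)"
    using sC by (simp add: V.scale_sum_right[symmetric] sum_lhit_one[OF f])
  also have "\<dots> = s"
    by (rule sum_inv_card_G[OF nG])
  finally show ?thesis .
qed


lemma rhit_avg_rhit_expand:
  assumes c0: "c0 \<in> carrier G" and k: "k \<in> orbit f"
  shows "rhit (c0, k) (avg_rhit f X v) = (\<Sum>a\<in>carrier G.
    fscale (inv_card_G * inverse (\<tau> a (inv\<^bsub>G\<^esub> a) k) * \<tau> c0 a (lact (inv\<^bsub>G\<^esub> a) k))
      (rhit (c0 \<otimes>\<^bsub>G\<^esub> a, lact (inv\<^bsub>G\<^esub> a) k) (X (rhit (inv\<^bsub>G\<^esub> a, k) v))))"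
proof -
  have "rhit (c0, k) (avg_rhit f X v) = (\<Sum>a\<in>carrier G. \<Sum>h\<in>orbit f. if h = k then
      fscale (inv_card_G * inverse (\<tau> a (inv\<^bsub>G\<^esub> a) h) * \<tau> c0 a (lact (inv\<^bsub>G\<^esub> a) h))
        (rhit (c0 \<otimes>\<^bsub>G\<^esub> a, lact (inv\<^bsub>G\<^esub> a) h) (X (rhit (inv\<^bsub>G\<^esub> a, h) v))) else 0)"
    unfolding avg_rhit_def VP.linear_sum[OF flinear_rhit] VP.linear_scale[OF flinear_rhit]
  proof (intro sum.cong refl)
    fix a h assume a: "a \<in> carrier G" and "h \<in> orbit f"
    then have h: "h \<in> carrier F" using orbit_subset[OF f] by auto
    have h': "lact (inv\<^bsub>G\<^esub> a) h \<in> carrier F" using lact_closed a h by simp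
    show "fscale (inv_card_G * inverse (\<tau> a (inv\<^bsub>G\<^esub> a) h))
        (rhit (c0, k) (rhit (a, lact (inv\<^bsub>G\<^esub> a) h) (X (rhit (inv\<^bsub>G\<^esub> a, h) v))))
      = (if h = k then fscale (inv_card_G * inverse (\<tau> a (inv\<^bsub>G\<^esub> a) h) * \<tau> c0 a (lact (inv\<^bsub>G\<^esub> a) h))
        (rhit (c0 \<otimes>\<^bsub>G\<^esub> a, lact (inv\<^bsub>G\<^esub> a) h) (X (rhit (inv\<^bsub>G\<^esub> a, h) v))) else 0)"
      using rhit_rhit[OF c0 a h', of k] lact_lact_inv[OF a h]
      by (auto simp: V.scale_scale)
  qed
  then show ?thesis
    using k by (simp add: sum.delta' finite_orbit)
qed

lemma avg_rhit_rhit_expand: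
  assumes X: "flinear X" and c0: "c0 \<in> carrier G" and k: "k \<in> orbit f"
  shows "avg_rhit f X (rhit (c0, k) v) = (\<Sum>b\<in>carrier G.
    fscale (inv_card_G * inverse (\<tau> b (inv\<^bsub>G\<^esub> b) (lact c0 k)) * \<tau> (inv\<^bsub>G\<^esub> b) c0 k)
      (rhit (b, lact (inv\<^bsub>G\<^esub> b) (lact c0 k)) (X (rhit (inv\<^bsub>G\<^esub> b \<otimes>\<^bsub>G\<^esub> c0, k) v))))"
proof -
  have kF: "k \<in> carrier F" using k orbit_subset[OF f] by auto
  have "avg_rhit f X (rhit (c0, k) v) = (\<Sum>b\<in>carrier G. \<Sum>h\<in>orbit f. if h = lact c0 k then
      fscale (inv_card_G * inverse (\<tau> b (inv\<^bsub>G\<^esub> b) h) * \<tau> (inv\<^bsub>G\<^esub> b) c0 k)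
        (rhit (b, lact (inv\<^bsub>G\<^esub> b) h) (X (rhit (inv\<^bsub>G\<^esub> b \<otimes>\<^bsub>G\<^esub> c0, k) v))) else 0)"
    unfolding avg_rhit_def
  proof (intro sum.cong refl)
    fix b h assume b: "b \<in> carrier G"
    have "rhit (inv\<^bsub>G\<^esub> b, h) (rhit (c0, k) v) = fscale (if h = lact c0 k then \<tau> (inv\<^bsub>G\<^esub> b) c0 k else 0)
        (rhit (inv\<^bsub>G\<^esub> b \<otimes>\<^bsub>G\<^esub> c0, k) v)"
      using rhit_rhit[OF G.inv_closed[OF b] c0 kF] .
    then show "fscale (inv_card_G * inverse (\<tau> b (inv\<^bsub>G\<^esub> b) h))
        (rhit (b, lact (inv\<^bsub>G\<^esub> b) h) (X (rhit (inv\<^bsub>G\<^esub> b, h) (rhit (c0, k) v))))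
      = (if h = lact c0 k then fscale (inv_card_G * inverse (\<tau> b (inv\<^bsub>G\<^esub> b) h) * \<tau> (inv\<^bsub>G\<^esub> b) c0 k)
        (rhit (b, lact (inv\<^bsub>G\<^esub> b) h) (X (rhit (inv\<^bsub>G\<^esub> b \<otimes>\<^bsub>G\<^esub> c0, k) v))) else 0)"
      by (simp add: VP.linear_scale[OF X] VP.linear_scale[OF flinear_rhit] V.scale_scale)
  qed
  then show ?thesis
    using lact_in_orbit[OF k c0 f] by (simp add: sum.delta' finite_orbit)
qed

lemma rhit_avg_rhit:
  assumes X: "flinear X" and v: "v \<in> C f"
  shows "rhit j (avg_rhit f X v) = avg_rhit f X (rhit j v)"
proof (cases "j \<in> C_index f")
  case False
  then show ?thesis
    using rhit_outside[OF f avg_rhit_C False] rhit_outside[OF f v False]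
      VP.linear_0[OF flinear_avg_rhit[OF X]] by simp
next
  case True
  then obtain c0 k where j: "j = (c0, k)" and c0: "c0 \<in> carrier G" and k: "k \<in> orbit f"
    by (auto simp: C_index_def)
  have kF: "k \<in> carrier F" using k orbit_subset[OF f] by auto
  have "avg_rhit f X (rhit j v) = (\<Sum>a\<in>carrier G.
    fscale (inv_card_G * inverse (\<tau> (c0 \<otimes>\<^bsub>G\<^esub> a) (inv\<^bsub>G\<^esub> (c0 \<otimes>\<^bsub>G\<^esub> a)) (lact c0 k))
        * \<tau> (inv\<^bsub>G\<^esub> (c0 \<otimes>\<^bsub>G\<^esub> a)) c0 k)
      (rhit (c0 \<otimes>\<^bsub>G\<^esub> a, lact (inv\<^bsub>G\<^esub> (c0 \<otimes>\<^bsub>G\<^esub> a)) (lact c0 k))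
        (X (rhit (inv\<^bsub>G\<^esub> (c0 \<otimes>\<^bsub>G\<^esub> a) \<otimes>\<^bsub>G\<^esub> c0, k) v))))"
    unfolding j avg_rhit_rhit_expand[OF X c0 k] by (rule sum_G_reindex_left[OF c0])
  also have "\<dots> = rhit j (avg_rhit f X v)"
    unfolding j rhit_avg_rhit_expand[OF c0 k]
  proof (intro sum.cong refl)
    fix a assume a: "a \<in> carrier G"
    have e: "inv\<^bsub>G\<^esub> (c0 \<otimes>\<^bsub>G\<^esub> a) \<otimes>\<^bsub>G\<^esub> c0 = inv\<^bsub>G\<^esub> a"
      using c0 a by (simp add: G.inv_mult_group G.m_assoc)
    then have "lact (inv\<^bsub>G\<^esub> (c0 \<otimes>\<^bsub>G\<^esub> a)) (lact c0 k) = lact (inv\<^bsub>G\<^esub> a) k"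
      using c0 a kF by (simp add: lact_mult[symmetric])
    then show "fscale (inv_card_G * inverse (\<tau> (c0 \<otimes>\<^bsub>G\<^esub> a) (inv\<^bsub>G\<^esub> (c0 \<otimes>\<^bsub>G\<^esub> a)) (lact c0 k))
        * \<tau> (inv\<^bsub>G\<^esub> (c0 \<otimes>\<^bsub>G\<^esub> a)) c0 k)
      (rhit (c0 \<otimes>\<^bsub>G\<^esub> a, lact (inv\<^bsub>G\<^esub> (c0 \<otimes>\<^bsub>G\<^esub> a)) (lact c0 k))
        (X (rhit (inv\<^bsub>G\<^esub> (c0 \<otimes>\<^bsub>G\<^esub> a) \<otimes>\<^bsub>G\<^esub> c0, k) v)))
      = fscale (inv_card_G * inverse (\<tau> a (inv\<^bsub>G\<^esub> a) k) * \<tau> c0 a (lact (inv\<^bsub>G\<^esub> a) k))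
      (rhit (c0 \<otimes>\<^bsub>G\<^esub> a, lact (inv\<^bsub>G\<^esub> a) k) (X (rhit (inv\<^bsub>G\<^esub> a, k) v)))"
      unfolding e using tau_weight_shift_left[OF c0 a kF] by (simp add: mult.assoc)
  qed
  finally show ?thesis by simp
qed


lemma lhit_avg_lhit_expand:
  assumes XC: "X ` C f \<subseteq> C f" and v: "v \<in> C f"
    and c0: "c0 \<in> carrier G" and k0: "k0 \<in> orbit f"
  shows "lhit (c0, k0) (avg_lhit f X v) = (\<Sum>a\<in>carrier G.
    fscale (inv_card_G * inverse (\<tau> (inv\<^bsub>G\<^esub> a) a (lact c0 k0)) * \<tau> a c0 k0)
      (lhit (a \<otimes>\<^bsub>G\<^esub> c0, k0) (X (lhit (inv\<^bsub>G\<^esub> a, lact a (lact c0 k0)) v))))"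
proof -
  have k0F: "k0 \<in> carrier F" using k0 orbit_subset[OF f] by auto
  have "lhit (c0, k0) (avg_lhit f X v) = (\<Sum>a\<in>carrier G. \<Sum>k\<in>orbit f. if k = lact c0 k0 then
      fscale (inv_card_G * inverse (\<tau> (inv\<^bsub>G\<^esub> a) a k) * \<tau> a c0 k0)
        (lhit (a \<otimes>\<^bsub>G\<^esub> c0, k0) (X (lhit (inv\<^bsub>G\<^esub> a, lact a k) v))) else 0)"
    unfolding avg_lhit_def VP.linear_sum[OF flinear_lhit] VP.linear_scale[OF flinear_lhit]
  proof (intro sum.cong refl)
    fix a k assume a: "a \<in> carrier G"
    have "X (lhit (inv\<^bsub>G\<^esub> a, lact a k) v) \<in> C f" using XC lhit_C[OF f v] by blast
    then show "fscale (inv_card_G * inverse (\<tau> (inv\<^bsub>G\<^esub> a) a k))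
        (lhit (c0, k0) (lhit (a, k) (X (lhit (inv\<^bsub>G\<^esub> a, lact a k) v))))
      = (if k = lact c0 k0 then fscale (inv_card_G * inverse (\<tau> (inv\<^bsub>G\<^esub> a) a k) * \<tau> a c0 k0)
        (lhit (a \<otimes>\<^bsub>G\<^esub> c0, k0) (X (lhit (inv\<^bsub>G\<^esub> a, lact a k) v))) else 0)"
      using lhit_lhit[OF f c0 a k0F, where k'=k] by (auto simp: V.scale_scale)
  qed
  then show ?thesis
    using lact_in_orbit[OF k0 c0 f] by (simp add: sum.delta' finite_orbit)
qed

lemma avg_lhit_lhit_expand:
  assumes X: "flinear X" and v: "v \<in> C f" and c0: "c0 \<in> carrier G" and k0: "k0 \<in> orbit f"
  shows "avg_lhit f X (lhit (c0, k0) v) = (\<Sum>b\<in>carrier G.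
    fscale (inv_card_G * inverse (\<tau> (inv\<^bsub>G\<^esub> b) b k0) * \<tau> c0 (inv\<^bsub>G\<^esub> b) (lact b k0))
      (lhit (b, k0) (X (lhit (c0 \<otimes>\<^bsub>G\<^esub> inv\<^bsub>G\<^esub> b, lact b k0) v))))"
proof -
  have "avg_lhit f X (lhit (c0, k0) v) = (\<Sum>b\<in>carrier G. \<Sum>k\<in>orbit f. if k = k0 then
      fscale (inv_card_G * inverse (\<tau> (inv\<^bsub>G\<^esub> b) b k) * \<tau> c0 (inv\<^bsub>G\<^esub> b) (lact b k))
        (lhit (b, k) (X (lhit (c0 \<otimes>\<^bsub>G\<^esub> inv\<^bsub>G\<^esub> b, lact b k) v))) else 0)"
    unfolding avg_lhit_def
  proof (intro sum.cong refl)
    fix b k assume b: "b \<in> carrier G" and "k \<in> orbit f"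
    then have k: "k \<in> carrier F" using orbit_subset[OF f] by auto
    have "(k0 = lact (inv\<^bsub>G\<^esub> b) (lact b k)) = (k = k0)"
      using lact_inv_lact[OF b k] by auto
    then have "lhit (inv\<^bsub>G\<^esub> b, lact b k) (lhit (c0, k0) v)
        = fscale (if k = k0 then \<tau> c0 (inv\<^bsub>G\<^esub> b) (lact b k) else 0)
            (lhit (c0 \<otimes>\<^bsub>G\<^esub> inv\<^bsub>G\<^esub> b, lact b k) v)"
      using lhit_lhit[OF f G.inv_closed[OF b] c0 lact_closed[OF b k] v, where k'=k0] by simp
    then show "fscale (inv_card_G * inverse (\<tau> (inv\<^bsub>G\<^esub> b) b k))
        (lhit (b, k) (X (lhit (inv\<^bsub>G\<^esub> b, lact b k) (lhit (c0, k0) v))))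
      = (if k = k0 then fscale (inv_card_G * inverse (\<tau> (inv\<^bsub>G\<^esub> b) b k) * \<tau> c0 (inv\<^bsub>G\<^esub> b) (lact b k))
        (lhit (b, k) (X (lhit (c0 \<otimes>\<^bsub>G\<^esub> inv\<^bsub>G\<^esub> b, lact b k) v))) else 0)"
      by (simp add: VP.linear_scale[OF X] VP.linear_scale[OF flinear_lhit] V.scale_scale)
  qed
  then show ?thesis
    using k0 by (simp add: sum.delta' finite_orbit)
qed

lemma lhit_avg_lhit:
  assumes X: "flinear X" and XC: "X ` C f \<subseteq> C f" and v: "v \<in> C f"
  shows "lhit i (avg_lhit f X v) = avg_lhit f X (lhit i v)"
proof (cases "i \<in> C_index f")
  case False
  then show ?thesis
    using lhit_outside[OF f avg_lhit_C[OF XC v] False] lhit_outside[OF f v False]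
      VP.linear_0[OF flinear_avg_lhit[OF X]] by simp
next
  case True
  then obtain c0 k0 where i: "i = (c0, k0)" and c0: "c0 \<in> carrier G" and k0: "k0 \<in> orbit f"
    by (auto simp: C_index_def)
  have k0F: "k0 \<in> carrier F" using k0 orbit_subset[OF f] by auto
  have "avg_lhit f X (lhit i v) = (\<Sum>a\<in>carrier G.
    fscale (inv_card_G * inverse (\<tau> (inv\<^bsub>G\<^esub> (a \<otimes>\<^bsub>G\<^esub> c0)) (a \<otimes>\<^bsub>G\<^esub> c0) k0)
        * \<tau> c0 (inv\<^bsub>G\<^esub> (a \<otimes>\<^bsub>G\<^esub> c0)) (lact (a \<otimes>\<^bsub>G\<^esub> c0) k0))
      (lhit (a \<otimes>\<^bsub>G\<^esub> c0, k0)
        (X (lhit (c0 \<otimes>\<^bsub>G\<^esub> inv\<^bsub>G\<^esub> (a \<otimes>\<^bsub>G\<^esub> c0), lact (a \<otimes>\<^bsub>G\<^esub> c0) k0) v))))"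
    unfolding i avg_lhit_lhit_expand[OF X v c0 k0] by (rule sum_G_reindex_right[OF c0])
  also have "\<dots> = lhit i (avg_lhit f X v)"
    unfolding i lhit_avg_lhit_expand[OF XC v c0 k0]
  proof (intro sum.cong refl)
    fix a assume a: "a \<in> carrier G"
    have e: "c0 \<otimes>\<^bsub>G\<^esub> inv\<^bsub>G\<^esub> (a \<otimes>\<^bsub>G\<^esub> c0) = inv\<^bsub>G\<^esub> a"
      using c0 a by (simp add: G.inv_mult_group G.m_assoc[symmetric])
    have "lact (a \<otimes>\<^bsub>G\<^esub> c0) k0 = lact a (lact c0 k0)"
      using c0 a k0F by (simp add: lact_mult)
    then show "fscale (inv_card_G * inverse (\<tau> (inv\<^bsub>G\<^esub> (a \<otimes>\<^bsub>G\<^esub> c0)) (a \<otimes>\<^bsub>G\<^esub> c0) k0)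
        * \<tau> c0 (inv\<^bsub>G\<^esub> (a \<otimes>\<^bsub>G\<^esub> c0)) (lact (a \<otimes>\<^bsub>G\<^esub> c0) k0))
      (lhit (a \<otimes>\<^bsub>G\<^esub> c0, k0)
        (X (lhit (c0 \<otimes>\<^bsub>G\<^esub> inv\<^bsub>G\<^esub> (a \<otimes>\<^bsub>G\<^esub> c0), lact (a \<otimes>\<^bsub>G\<^esub> c0) k0) v)))
      = fscale (inv_card_G * inverse (\<tau> (inv\<^bsub>G\<^esub> a) a (lact c0 k0)) * \<tau> a c0 k0)
      (lhit (a \<otimes>\<^bsub>G\<^esub> c0, k0) (X (lhit (inv\<^bsub>G\<^esub> a, lact a (lact c0 k0)) v)))"
      using tau_weight_shift_right[OF a c0 k0F] unfolding e by (simp add: mult.assoc)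
  qed
  finally show ?thesis by simp
qed

lemma rhit_avg_lhit:
  assumes XC: "X ` C f \<subseteq> C f"
    and XL: "\<And>w j. w \<in> C f \<Longrightarrow> rhit j (X w) = X (rhit j w)" and v: "v \<in> C f"
  shows "rhit j (avg_lhit f X v) = avg_lhit f X (rhit j v)"
  unfolding avg_lhit_def VP.linear_sum[OF flinear_rhit] VP.linear_scale[OF flinear_rhit]
proof (intro sum.cong refl arg_cong[where f="fscale _"])
  fix a k
  have w: "lhit (inv\<^bsub>G\<^esub> a, lact a k) v \<in> C f" using lhit_C[OF f v] .
  then have "X (lhit (inv\<^bsub>G\<^esub> a, lact a k) v) \<in> C f" using XC by blast
  then show "rhit j (lhit (a, k) (X (lhit (inv\<^bsub>G\<^esub> a, lact a k) v)))
      = lhit (a, k) (X (lhit (inv\<^bsub>G\<^esub> a, lact a k) (rhit j v)))"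
    using rhit_lhit_commute[OF f] XL[OF w] rhit_lhit_commute[OF f v] by metis
qed


lemma bimodule_projection_exists:
  assumes nG: "(of_nat (card (carrier G)) :: 'k) \<noteq> 0"
    and S: "subcoalgebra (Hspace F G) (Hcomul F G lact \<tau>) S" and SC: "S \<subseteq> C f"
  obtains P where "flinear P" "\<And>c. P c \<in> S" "\<And>s. s \<in> S \<Longrightarrow> P s = s"
    "\<And>c j. c \<in> C f \<Longrightarrow> rhit j (P c) = P (rhit j c)"
    "\<And>c i. c \<in> C f \<Longrightarrow> lhit i (P c) = P (lhit i c)"
proof -
  have Ss: "V.subspace S" using S by (simp add: subcoalgebra_def lsubspace_eq_subspace)
  have SL: "\<And>j s. s \<in> S \<Longrightarrow> rhit j s \<in> S" and SR: "\<And>i s. s \<in> S \<Longrightarrow> lhit i s \<in> S"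
    using subcoalgebra_hit_closed[OF S] by auto
  obtain p where p: "flinear p" "\<And>w. p w \<in> S" "\<And>s. s \<in> S \<Longrightarrow> p s = s"
    using subspace_projection_exists[OF Ss] by blast
  define X where "X = avg_rhit f p"
  have X: "flinear X" "\<And>w. X w \<in> S" "\<And>s. s \<in> S \<Longrightarrow> X s = s"
    unfolding X_def
    using flinear_avg_rhit[OF p(1)] avg_rhit_in[OF Ss p(2) SL] avg_rhit_id[OF nG SC SL p(3)]
    by simp_all
  have XC: "X ` C f \<subseteq> C f"
    using X(2) SC by blast
  have XL: "\<And>w j. w \<in> C f \<Longrightarrow> rhit j (X w) = X (rhit j w)"
    unfolding X_def using rhit_avg_rhit[OF p(1)] by auto
  show ?thesis
  proof (rule that[of "avg_lhit f X"])
    show "flinear (avg_lhit f X)" by (rule flinear_avg_lhit[OF X(1)])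
    show "avg_lhit f X c \<in> S" for c by (rule avg_lhit_in[OF Ss X(2) SR])
    show "avg_lhit f X s = s" if "s \<in> S" for s by (rule avg_lhit_id[OF nG SC SR X(3) that])
    show "rhit j (avg_lhit f X c) = avg_lhit f X (rhit j c)" if "c \<in> C f" for c j
      by (rule rhit_avg_lhit[OF XC XL that])
    show "lhit i (avg_lhit f X c) = avg_lhit f X (lhit i c)" if "c \<in> C f" for c i
      by (rule lhit_avg_lhit[OF X(1) XC that])
  qed
qed


end

end


section \<open>Cosemisimplicity of \<open>C\<^sub>f\<close>\<close>

context matched_pair
begin

abbreviation Hsubcoalgebra :: "('g \<times> 'f \<Rightarrow> 'k) set \<Rightarrow> bool" where
  "Hsubcoalgebra \<equiv> subcoalgebra (Hspace F G) (Hcomul F G lact \<tau>)"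

abbreviation Hsimple :: "('g \<times> 'f \<Rightarrow> 'k) set \<Rightarrow> bool" where
  "Hsimple \<equiv> simple_subcoalgebra (Hspace F G) (Hcomul F G lact \<tau>)"

lemma Hsubcoalgebra_subspace: "Hsubcoalgebra E \<Longrightarrow> V.subspace E"
  by (simp add: subcoalgebra_def lsubspace_eq_subspace)

context
  fixes f assumes f: "f \<in> carrier F"
begin

lemma dim_less_in_C:
  "V.subspace E \<Longrightarrow> V.subspace D \<Longrightarrow> E \<subset> D \<Longrightarrow> D \<subseteq> C f \<Longrightarrow> V.dim E < V.dim D"
  using dim_less_if_psubset[of E D "bvec ` C_index f"] span_bvec[OF finite_C_index] finite_C_index
  by auto

lemma Hcomul_bimodule_idempotent:
  assumes Q: "Q ` C f \<subseteq> C f" "\<And>c. Q (Q c) = Q c"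
    and QL: "\<And>c j. c \<in> C f \<Longrightarrow> rhit j (Q c) = Q (rhit j c)"
    and QR: "\<And>c i. c \<in> C f \<Longrightarrow> lhit i (Q c) = Q (lhit i c)"
    and d: "d \<in> C f"
  shows "Hcomul F G lact \<tau> (Q d) = map_fst Q (map_snd Q (Hcomul F G lact \<tau> d))"
proof
  fix ij :: "('g \<times> 'f) \<times> ('g \<times> 'f)"
  obtain i j where ij: "ij = (i, j)" by (cases ij)
  have Qd: "Q d \<in> C f" using d Q(1) by auto
  have "(\<lambda>i'. Q (\<lambda>j'. Hcomul F G lact \<tau> d (i', j')) j) = (\<lambda>i'. Q (lhit i' d) j)"
    using C_subset_Hspace[OF f] d by (simp add: Hcomul_apply lhit_def subset_iff)
  also have "\<dots> = rhit j (Q d)"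
  proof
    fix i'
    show "Q (lhit i' d) j = rhit j (Q d) i'"
      using fun_cong[OF QR[OF d, of i'], of j] by (simp add: lhit_def)
  qed
  finally have "map_fst Q (map_snd Q (Hcomul F G lact \<tau> d)) ij = Q (rhit j (Q d)) i"
    by (simp add: map_fst_def map_snd_def ij)
  also have "\<dots> = Hcomul F G lact \<tau> (Q d) ij"
    using QL[OF Qd] Q(2) C_subset_Hspace[OF f] Qd by (simp add: Hcomul_apply ij subset_iff)
  finally show "Hcomul F G lact \<tau> (Q d) ij = map_fst Q (map_snd Q (Hcomul F G lact \<tau> d)) ij" ..
qed

lemma Hsubcoalgebra_image:
  assumes Q: "flinear Q" "Q ` C f \<subseteq> C f" "\<And>c. Q (Q c) = Q c"
    and QL: "\<And>c j. c \<in> C f \<Longrightarrow> rhit j (Q c) = Q (rhit j c)"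
    and QR: "\<And>c i. c \<in> C f \<Longrightarrow> lhit i (Q c) = Q (lhit i c)"
    and D: "Hsubcoalgebra D" "D \<subseteq> C f"
  shows "Hsubcoalgebra (Q ` D)"
  unfolding subcoalgebra_def lsubspace_eq_subspace lspan_eq_span
proof (intro conjI ballI)
  show "Q ` D \<subseteq> Hspace F G" using Q(2) D(2) C_subset_Hspace[OF f] by blast
  show "V.subspace (Q ` D)"
    using VP.linear_subspace_image[OF Q(1) Hsubcoalgebra_subspace[OF D(1)]] .
  fix e assume "e \<in> Q ` D"
  then obtain d where d: "d \<in> D" "e = Q d" by auto
  have "Hcomul F G lact \<tau> d \<in> V.span {tensor x y | x y. x \<in> D \<and> y \<in> D}"
    using D(1) d(1) by (simp add: subcoalgebra_def lspan_eq_span)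
  then have "map_snd Q (Hcomul F G lact \<tau> d) \<in> V.span (map_snd Q ` {tensor x y | x y. x \<in> D \<and> y \<in> D})"
    using VP.linear_span_image[OF flinear_map_snd[OF Q(1)]] by blast
  then have "map_fst Q (map_snd Q (Hcomul F G lact \<tau> d))
      \<in> V.span (map_fst Q ` map_snd Q ` {tensor x y | x y. x \<in> D \<and> y \<in> D})"
    using VP.linear_span_image[OF flinear_map_fst[OF Q(1)]] by blast
  moreover have "Hcomul F G lact \<tau> e = map_fst Q (map_snd Q (Hcomul F G lact \<tau> d))"
    using Hcomul_bimodule_idempotent[OF Q(2,3) QL QR] d D(2) by blast
  ultimately have "Hcomul F G lact \<tau> e
      \<in> V.span (map_fst Q ` map_snd Q ` {tensor x y | x y. x \<in> D \<and> y \<in> D})"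
    by simp
  also have "\<dots> \<subseteq> V.span {tensor x y | x y. x \<in> Q ` D \<and> y \<in> Q ` D}"
  proof (intro V.span_mono subsetI)
    fix t assume "t \<in> map_fst Q ` map_snd Q ` {tensor x y | x y. x \<in> D \<and> y \<in> D}"
    then obtain x y where "x \<in> D" "y \<in> D" "t = tensor (Q x) (Q y)"
      by (auto simp: map_snd_tensor[OF Q(1)] map_fst_tensor[OF Q(1)])
    then show "t \<in> {tensor x y | x y. x \<in> Q ` D \<and> y \<in> Q ` D}"
      by blast
  qed
  finally show "Hcomul F G lact \<tau> e \<in> V.span {tensor x y | x y. x \<in> Q ` D \<and> y \<in> Q ` D}" .
qed

lemma Hsubcoalgebra_complement:
  assumes nG: "(of_nat (card (carrier G)) :: 'k) \<noteq> 0"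
    and S: "Hsubcoalgebra S" "S \<subseteq> D" and D: "Hsubcoalgebra D" "D \<subseteq> C f"
  obtains E where "Hsubcoalgebra E" "E \<subseteq> D" "S \<inter> E = {0}" "D = {x + y | x y. x \<in> S \<and> y \<in> E}"
proof -
  obtain P where P: "flinear P" "\<And>c. P c \<in> S" "\<And>s. s \<in> S \<Longrightarrow> P s = s"
    "\<And>c j. c \<in> C f \<Longrightarrow> rhit j (P c) = P (rhit j c)"
    "\<And>c i. c \<in> C f \<Longrightarrow> lhit i (P c) = P (lhit i c)"
    using bimodule_projection_exists[OF f nG S(1)] S(2) D(2) by blast
  let ?Q = "\<lambda>c. c - P c"
  have Q: "flinear ?Q" "\<And>c. ?Q (?Q c) = ?Q c"
    using VP.linear_compose_sub[OF V.linear_ident P(1)] VP.linear_diff[OF P(1)] P(2,3) by simp_all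
  have "P c \<in> C f" for c
    using P(2) S(2) D(2) by blast
  then have QC: "?Q ` C f \<subseteq> C f"
    using V.subspace_diff[OF subspace_supported_on] by blast
  have QL: "rhit j (?Q c) = ?Q (rhit j c)" and QR: "lhit i (?Q c) = ?Q (lhit i c)"
    if "c \<in> C f" for c i j
    using P(4,5)[OF that] VP.linear_diff[OF flinear_rhit] VP.linear_diff[OF flinear_lhit] by simp_all
  have "Hsubcoalgebra (?Q ` D)"
    by (rule Hsubcoalgebra_image[OF Q(1) QC Q(2) QL QR D])
  then show ?thesis
    by (rule that[OF _ projection_complement[OF P(1-3) Hsubcoalgebra_subspace[OF D(1)] S(2)]])
qed

lemma Hsimple_exists:
  assumes D: "Hsubcoalgebra D" "D \<subseteq> C f" "D \<noteq> {0}"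
  obtains S where "Hsimple S" "S \<subseteq> D"
proof -
  define N where "N = {E. Hsubcoalgebra E \<and> E \<subseteq> D \<and> E \<noteq> {0}}"
  have "D \<in> N" using D by (simp add: N_def)
  then obtain S where S: "S \<in> N" and Smin: "\<And>E. E \<in> N \<Longrightarrow> V.dim S \<le> V.dim E"
    using ex_has_least_nat[of "\<lambda>E. E \<in> N" D V.dim] by blast
  have SC: "S \<subseteq> C f" using S D(2) by (auto simp: N_def)
  have "Hsimple S"
    unfolding simple_subcoalgebra_def zero_fun_singleton
  proof (intro conjI allI impI)
    show "Hsubcoalgebra S" "S \<noteq> {0}" using S by (auto simp: N_def)
    fix E assume E: "Hsubcoalgebra E \<and> E \<subseteq> S"
    show "E = {0} \<or> E = S"
    proof (rule ccontr)
      assume "\<not> (E = {0} \<or> E = S)"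
      then have EN: "E \<in> N" and "E \<subset> S"
        using E S by (auto simp: N_def)
      then have "V.dim E < V.dim S"
        using dim_less_in_C[OF Hsubcoalgebra_subspace Hsubcoalgebra_subspace _ SC] E \<open>Hsubcoalgebra S\<close>
        by blast
      then show False using Smin[OF EN] by simp
    qed
  qed
  then show ?thesis using S that by (auto simp: N_def)
qed

lemma Hsubcoalgebra_decomposition:
  assumes nG: "(of_nat (card (carrier G)) :: 'k) \<noteq> 0"
    and "Hsubcoalgebra D" "D \<subseteq> C f"
  shows "\<exists>\<S>. (\<forall>S\<in>\<S>. Hsimple S) \<and> D = lspan (\<Union>\<S>)
    \<and> (\<forall>S\<in>\<S>. S \<inter> lspan (\<Union>(\<S> - {S})) = {\<lambda>_. 0})"
  using assms(2,3)
proof (induction "V.dim D" arbitrary: D rule: less_induct)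
  case less
  note D = less.prems
  show ?case
  proof (cases "D = {0}")
    case True
    then show ?thesis by (intro exI[of _ "{}"]) (simp add: lspan_eq_span zero_fun_singleton)
  next
    case False
    obtain S where S: "Hsimple S" "S \<subseteq> D"
      using Hsimple_exists[OF D False] .
    have SS: "Hsubcoalgebra S" "S \<noteq> {0}"
      using S(1) by (auto simp: simple_subcoalgebra_def zero_fun_singleton)
    obtain E where E: "Hsubcoalgebra E" "E \<subseteq> D" "S \<inter> E = {0}"
      "D = {x + y | x y. x \<in> S \<and> y \<in> E}"
      using Hsubcoalgebra_complement[OF nG SS(1) S(2) D] .
    have "E \<noteq> D" using E(3) S(2) SS(2) by auto
    with E(2) have "E \<subset> D" by blast
    then have "V.dim E < V.dim D"
      by (rule dim_less_in_C[OF Hsubcoalgebra_subspace[OF E(1)] Hsubcoalgebra_subspace[OF D(1)] _ D(2)])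
    moreover have "E \<subseteq> C f" using E(2) D(2) by blast
    ultimately obtain \<S> where \<S>: "\<forall>T\<in>\<S>. Hsimple T" "E = lspan (\<Union>\<S>)"
      "\<forall>T\<in>\<S>. T \<inter> lspan (\<Union>(\<S> - {T})) = {\<lambda>_. 0}"
      using less.hyps[OF _ E(1)] by blast
    have span: "V.span (\<Union>\<S>) = E" using \<S>(2) by (simp add: lspan_eq_span)
    have SE: "S \<inter> V.span (\<Union>\<S>) = {0}" using E(3) span by simp
    have indep: "\<forall>T\<in>\<S>. T \<inter> V.span (\<Union>(\<S> - {T})) = {0}"
      using \<S>(3) by (simp only: lspan_eq_span zero_fun_singleton)
    have "D = lspan (\<Union>(insert S \<S>))"
      unfolding lspan_eq_span span_Union_insert[OF Hsubcoalgebra_subspace[OF SS(1)]] span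
      by (rule E(4))
    moreover have "\<forall>T\<in>insert S \<S>. T \<inter> lspan (\<Union>(insert S \<S> - {T})) = {\<lambda>_. 0}"
      using direct_sum_insert[OF Hsubcoalgebra_subspace[OF SS(1)] SS(2) SE indep]
      by (simp only: lspan_eq_span zero_fun_singleton)
    ultimately show ?thesis
      using S(1) \<S>(1) by (intro exI[of _ "insert S \<S>"] conjI) auto
  qed
qed

lemma C_cosemisimple:
  assumes "(of_nat (card (carrier G)) :: 'k) \<noteq> 0"
  shows "cosemisimple_subcoalgebra (Hspace F G) (Hcomul F G lact \<tau>) (C f)"
  unfolding cosemisimple_subcoalgebra_def
  using C_subcoalgebra[OF f] Hsubcoalgebra_decomposition[OF assms C_subcoalgebra[OF f]] by blast


end

end


section \<open>Simplicity of \<open>C\<^sub>f\<close> for a free orbit\<close>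

context matched_pair
begin

context
  fixes f assumes f: "f \<in> carrier F" and stab: "stabilizer G lact f = {\<one>\<^bsub>G\<^esub>}"
begin

lemma lact_orbit_cancel:
  assumes h: "h \<in> orbit f" and x: "x \<in> carrier G" and g: "g \<in> carrier G"
    and eq: "lact x h = lact g h"
  shows "x = g"
proof -
  obtain y where y: "y \<in> carrier G" "h = lact y f" using h by (auto simp: orbit_def)
  have gy: "g \<otimes>\<^bsub>G\<^esub> y \<in> carrier G" "x \<otimes>\<^bsub>G\<^esub> y \<in> carrier G" using g x y by auto
  have "lact (x \<otimes>\<^bsub>G\<^esub> y) f = lact (g \<otimes>\<^bsub>G\<^esub> y) f" using eq y x g f by (simp add: lact_mult)
  then have "lact (inv\<^bsub>G\<^esub> (g \<otimes>\<^bsub>G\<^esub> y) \<otimes>\<^bsub>G\<^esub> (x \<otimes>\<^bsub>G\<^esub> y)) f = f"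
    using gy f lact_inv_lact[OF gy(1) f] by (simp add: lact_mult)
  then have "inv\<^bsub>G\<^esub> (g \<otimes>\<^bsub>G\<^esub> y) \<otimes>\<^bsub>G\<^esub> (x \<otimes>\<^bsub>G\<^esub> y) = \<one>\<^bsub>G\<^esub>"
    using gy stab by (auto simp: stabilizer_def)
  then have "x \<otimes>\<^bsub>G\<^esub> y = g \<otimes>\<^bsub>G\<^esub> y"
    using gy G.inv_equality G.inv_inv by (metis G.inv_closed)
  then show ?thesis using x g y by simp
qed

lemma lhit_rhit_free:
  assumes a: "a \<in> carrier G" and g: "g \<in> carrier G" and h: "h \<in> orbit f"
    and x0: "x0 \<in> carrier G" and x0h: "lact x0 h0 = h"
  shows "lhit (a, lact g h) (rhit (x0, h0) d)
    = fscale (\<tau> a g h * \<tau> (a \<otimes>\<^bsub>G\<^esub> g) x0 h0 * d (a \<otimes>\<^bsub>G\<^esub> g \<otimes>\<^bsub>G\<^esub> x0, h0)) (bvec (g, h))"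
proof
  fix q :: "'g \<times> 'f"
  obtain x m where q: "q = (x, m)" by (cases q)
  have "lhit (a, lact g h) (rhit (x0, h0) d) (x, m)
    = (if x \<in> carrier G \<and> m = h \<and> lact g h = lact x m
       then \<tau> a x m * (\<tau> (a \<otimes>\<^bsub>G\<^esub> x) x0 h0 * d (a \<otimes>\<^bsub>G\<^esub> x \<otimes>\<^bsub>G\<^esub> x0, h0)) else 0)"
    using a x0 x0h by (auto simp: lhit_def rhit_def)
  also have "\<dots> = (if x = g \<and> m = h
       then \<tau> a g h * (\<tau> (a \<otimes>\<^bsub>G\<^esub> g) x0 h0 * d (a \<otimes>\<^bsub>G\<^esub> g \<otimes>\<^bsub>G\<^esub> x0, h0)) else 0)"
    using lact_orbit_cancel[OF h _ g] g by auto
  finally show "lhit (a, lact g h) (rhit (x0, h0) d) q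
    = fscale (\<tau> a g h * \<tau> (a \<otimes>\<^bsub>G\<^esub> g) x0 h0 * d (a \<otimes>\<^bsub>G\<^esub> g \<otimes>\<^bsub>G\<^esub> x0, h0)) (bvec (g, h)) q"
    by (simp add: q bvec_def mult.assoc)
qed

lemma Hsubcoalgebra_contains_bvec:
  assumes E: "Hsubcoalgebra E" and d: "d \<in> E" "d \<in> C f" and nz: "d (g0, h0) \<noteq> 0"
    and g: "g \<in> carrier G" and h: "h \<in> orbit f"
  shows "bvec (g, h) \<in> E"
proof -
  have "(g0, h0) \<in> C_index f" using supported_onD[OF d(2) nz] .
  then have g0: "g0 \<in> carrier G" and h0: "h0 \<in> orbit f" by (auto simp: C_index_def)
  obtain y0 where y0: "y0 \<in> carrier G" "h0 = lact y0 f" using h0 by (auto simp: orbit_def)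
  obtain y where y: "y \<in> carrier G" "h = lact y f" using h by (auto simp: orbit_def)
  define x0 where "x0 = y \<otimes>\<^bsub>G\<^esub> inv\<^bsub>G\<^esub> y0"
  have x0: "x0 \<in> carrier G" "lact x0 h0 = h"
    using y y0 f by (simp_all add: x0_def lact_mult[symmetric] G.m_assoc)
  define a where "a = g0 \<otimes>\<^bsub>G\<^esub> inv\<^bsub>G\<^esub> x0 \<otimes>\<^bsub>G\<^esub> inv\<^bsub>G\<^esub> g"
  have a: "a \<in> carrier G" "a \<otimes>\<^bsub>G\<^esub> g \<otimes>\<^bsub>G\<^esub> x0 = g0"
    using g0 x0 g by (simp_all add: a_def G.m_assoc)
  define c where "c = \<tau> a g h * \<tau> (a \<otimes>\<^bsub>G\<^esub> g) x0 h0 * d (g0, h0)"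
  have "c \<noteq> 0"
    using tau_nonzero a g x0 nz orbit_subset[OF f] h h0 by (auto simp: c_def)
  have "rhit (x0, h0) d \<in> E" using subcoalgebra_hit_closed(1)[OF E d(1)] .
  then have "lhit (a, lact g h) (rhit (x0, h0) d) \<in> E"
    by (rule subcoalgebra_hit_closed(2)[OF E])
  then have "fscale c (bvec (g, h)) \<in> E"
    unfolding lhit_rhit_free[OF a(1) g h x0] a(2) c_def .
  then have "fscale (inverse c) (fscale c (bvec (g, h))) \<in> E"
    by (rule V.subspace_scale[OF Hsubcoalgebra_subspace[OF E]])
  then show ?thesis using \<open>c \<noteq> 0\<close> by (simp add: V.scale_scale)
qed

lemma C_simple: "Hsimple (C f)"
  unfolding simple_subcoalgebra_def zero_fun_singleton
proof (intro conjI allI impI C_subcoalgebra[OF f])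
  have "bvec (\<one>\<^bsub>G\<^esub>, f) \<in> C f"
    using self_in_orbit[OF f] by (auto intro: bvec_supported_on simp: C_index_def)
  moreover have "bvec (\<one>\<^bsub>G\<^esub>, f) \<noteq> (0 :: 'g \<times> 'f \<Rightarrow> 'k)"
    by (auto simp: bvec_def fun_eq_iff)
  ultimately show "C f \<noteq> {0}" by auto
next
  fix E assume E: "Hsubcoalgebra E \<and> E \<subseteq> C f"
  show "E = {0} \<or> E = C f"
  proof (cases "E = {0}")
    case False
    then obtain d where d: "d \<in> E" "d \<noteq> 0"
      using V.subspace_0[OF Hsubcoalgebra_subspace] E by auto
    then obtain g0 h0 where nz: "d (g0, h0) \<noteq> 0" by (auto simp: fun_eq_iff)
    have "bvec ` C_index f \<subseteq> E"
      using Hsubcoalgebra_contains_bvec[of E d g0 h0] E d nz by (auto simp: C_index_def)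
    then have "V.span (bvec ` C_index f) \<subseteq> E"
      using E by (intro V.span_minimal Hsubcoalgebra_subspace) auto
    then have "C f \<subseteq> E"
      by (simp add: span_bvec[OF finite_C_index])
    then show ?thesis using E by auto
  qed simp
qed


end

end


section \<open>The antipode on \<open>C\<^sub>f\<close>\<close>

context matched_pair
begin

definition antipode_index :: "'g \<times> 'f \<Rightarrow> 'g \<times> 'f" where
  "antipode_index i = (inv\<^bsub>G\<^esub> (ract (fst i) (snd i)), inv\<^bsub>F\<^esub> (lact (fst i) (snd i)))"

definition antipode_coeff :: "'g \<times> 'f \<Rightarrow> 'k" where
  "antipode_coeff i =
    inverse (\<sigma> (inv\<^bsub>G\<^esub> (fst i)) (lact (fst i) (snd i)) (inv\<^bsub>F\<^esub> (lact (fst i) (snd i))))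
    * inverse (\<tau> (inv\<^bsub>G\<^esub> (fst i)) (fst i) (snd i))"

lemma antipode_coeff_nonzero: "i \<in> carrier G \<times> carrier F \<Longrightarrow> antipode_coeff i \<noteq> 0"
  using sigma_nonzero tau_nonzero lact_closed by (auto simp: antipode_coeff_def)

lemma Hantipode_eq_sum:
  assumes "finite A" "supp c \<subseteq> A"
  shows "Hantipode F G lact ract \<sigma> \<tau> c
    = (\<Sum>i\<in>A. fscale (c i * antipode_coeff i) (bvec (antipode_index i)))"
proof
  fix j
  have "Hantipode F G lact ract \<sigma> \<tau> c j
      = (\<Sum>i\<in>supp c. c i * (antipode_coeff i * bvec (antipode_index i) j))"
    unfolding Hantipode_def lin_ext_def by (simp add: case_prod_beta antipode_coeff_def antipode_index_def)
  also have "\<dots> = (\<Sum>i\<in>A. c i * (antipode_coeff i * bvec (antipode_index i) j))"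
    using assms by (intro sum.mono_neutral_left) (auto simp: supp_def)
  finally show "Hantipode F G lact ract \<sigma> \<tau> c j
      = (\<Sum>i\<in>A. fscale (c i * antipode_coeff i) (bvec (antipode_index i))) j"
    by (simp add: sum_fun_apply mult.assoc)
qed

lemma Hantipode_bvec:
  "Hantipode F G lact ract \<sigma> \<tau> (bvec i) = fscale (antipode_coeff i) (bvec (antipode_index i))"
  using Hantipode_eq_sum[of "{i}" "bvec i"] by (simp add: supp_def bvec_def)

lemma antipode_index_inj: "inj_on antipode_index (carrier G \<times> carrier F)"
proof (rule inj_onI)
  fix p q assume p: "p \<in> carrier G \<times> carrier F" and q: "q \<in> carrier G \<times> carrier F"
    and e: "antipode_index p = antipode_index q"
  obtain g h g' h' where pq: "p = (g, h)" "q = (g', h')" by (cases p, cases q)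
  have g: "g \<in> carrier G" "h \<in> carrier F" "g' \<in> carrier G" "h' \<in> carrier F" using p q pq by auto
  have iG: "inv\<^bsub>G\<^esub> (ract g h) = inv\<^bsub>G\<^esub> (ract g' h')"
    and iF: "inv\<^bsub>F\<^esub> (lact g h) = inv\<^bsub>F\<^esub> (lact g' h')"
    using e by (simp_all add: pq antipode_index_def)
  have v: "ract g h = ract g' h'"
    by (rule inj_onD[OF G.inv_inj iG]) (simp_all add: ract_closed g)
  have u: "lact g h = lact g' h'"
    by (rule inj_onD[OF F.inv_inj iF]) (simp_all add: lact_closed g)
  have recover: "inv\<^bsub>F\<^esub> x = lact (inv\<^bsub>G\<^esub> (ract a x)) (inv\<^bsub>F\<^esub> (lact a x))"
    if "a \<in> carrier G" "x \<in> carrier F" for a x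
    by (simp add: inv_lact[OF that] lact_inv_lact ract_closed that)
  have "inv\<^bsub>F\<^esub> h = inv\<^bsub>F\<^esub> h'" using recover[OF g(1,2)] recover[OF g(3,4)] u v by simp
  then have "h = h'" by (rule inj_onD[OF F.inv_inj]) (simp_all add: g)
  moreover have "g = g'"
  proof -
    have "g = ract (ract g h) (inv\<^bsub>F\<^esub> h)" using ract_ract_inv[OF g(1,2)] by simp
    also have "\<dots> = ract (ract g' h') (inv\<^bsub>F\<^esub> h')" using v \<open>h = h'\<close> by simp
    also have "\<dots> = g'" by (rule ract_ract_inv[OF g(3,4)])
    finally show ?thesis .
  qed
  ultimately show "p = q" using pq by simp
qed

lemma inv_stabilizer_nonempty_iff:
  "inv_stabilizer F G lact f \<noteq> {} \<longleftrightarrow> inv\<^bsub>F\<^esub> f \<in> orbit f"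
proof
  assume "inv_stabilizer F G lact f \<noteq> {}"
  then obtain g where "g \<in> carrier G" "lact g f = inv\<^bsub>F\<^esub> f"
    by (auto simp: inv_stabilizer_def)
  then show "inv\<^bsub>F\<^esub> f \<in> orbit f"
    unfolding orbit_def by (metis image_eqI)
qed (auto simp: inv_stabilizer_def orbit_def)

context
  fixes f assumes f: "f \<in> carrier F"
begin

lemma Hantipode_C:
  assumes c: "c \<in> C f"
  shows "Hantipode F G lact ract \<sigma> \<tau> c = (\<Sum>i\<in>C_index f. fscale (c i * antipode_coeff i) (bvec (antipode_index i)))"
  using c finite_C_index by (intro Hantipode_eq_sum) (auto simp: supported_on_def)

lemma inv_orbit_if_Hantipode_C:
  assumes "Hantipode F G lact ract \<sigma> \<tau> ` C f \<subseteq> C f"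
  shows "inv\<^bsub>F\<^esub> f \<in> orbit f"
proof -
  let ?i = "(\<one>\<^bsub>G\<^esub>, f)"
  have "bvec ?i \<in> C f"
    using self_in_orbit[OF f] by (auto intro: bvec_supported_on simp: C_index_def)
  then have "Hantipode F G lact ract \<sigma> \<tau> (bvec ?i) \<in> C f"
    using assms by blast
  then have C: "fscale (antipode_coeff ?i) (bvec (antipode_index ?i)) \<in> C f"
    by (simp only: Hantipode_bvec)
  have "antipode_coeff ?i \<noteq> 0"
    using antipode_coeff_nonzero f by simp
  then have "fscale (antipode_coeff ?i) (bvec (antipode_index ?i)) (antipode_index ?i) \<noteq> 0"
    by (simp add: bvec_def)
  then have "antipode_index ?i \<in> C_index f"
    by (rule supported_onD[OF C])
  then show ?thesis
    using f by (simp add: antipode_index_def C_index_def lact_one)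
qed

context
  assumes inv_orbit: "inv\<^bsub>F\<^esub> f \<in> orbit f"
begin

lemma antipode_index_C_index: "antipode_index ` C_index f = C_index f"
proof -
  obtain y0 where y0: "y0 \<in> carrier G" "lact y0 f = inv\<^bsub>F\<^esub> f"
    using inv_orbit by (auto simp: orbit_def)
  have "inv\<^bsub>F\<^esub> h \<in> orbit f" if h: "h \<in> orbit f" for h
  proof -
    obtain y where y: "y \<in> carrier G" "h = lact y f" using h by (auto simp: orbit_def)
    have "inv\<^bsub>F\<^esub> h = lact (ract y f \<otimes>\<^bsub>G\<^esub> y0) f"
      using inv_lact[OF y(1) f] y y0 f ract_closed by (simp add: lact_mult)
    then show ?thesis using y y0 f ract_closed by (auto simp: orbit_def)
  qed
  then have "antipode_index ` C_index f \<subseteq> C_index f"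
    using lact_in_orbit[OF _ _ f] ract_closed orbit_subset[OF f]
    by (auto simp: antipode_index_def C_index_def)
  moreover have "inj_on antipode_index (C_index f)"
    using inj_on_subset[OF antipode_index_inj C_index_subset[OF f]] .
  ultimately show ?thesis
    using card_image finite_C_index by (intro card_subset_eq) auto
qed

lemma Hantipode_image_C: "Hantipode F G lact ract \<sigma> \<tau> ` C f = C f"
proof
  show "Hantipode F G lact ract \<sigma> \<tau> ` C f \<subseteq> C f"
  proof
    fix x assume "x \<in> Hantipode F G lact ract \<sigma> \<tau> ` C f"
    then obtain c where c: "c \<in> C f" "x = Hantipode F G lact ract \<sigma> \<tau> c" by auto
    have "bvec (antipode_index i) \<in> C f" if "i \<in> C_index f" for i
      using antipode_index_C_index that by (auto intro: bvec_supported_on)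
    then show "x \<in> C f"
      unfolding c(2) Hantipode_C[OF c(1)]
      by (intro V.subspace_sum[OF subspace_supported_on] V.subspace_scale[OF subspace_supported_on])
  qed
  show "C f \<subseteq> Hantipode F G lact ract \<sigma> \<tau> ` C f"
  proof
    fix c' :: "'g \<times> 'f \<Rightarrow> 'k" assume c': "c' \<in> C f"
    define c where "c i = (if i \<in> C_index f then c' (antipode_index i) * inverse (antipode_coeff i) else 0)" for i
    have cC: "c \<in> C f" by (auto simp: c_def supported_on_def supp_def)
    have inj: "inj_on antipode_index (C_index f)"
      using inj_on_subset[OF antipode_index_inj C_index_subset[OF f]] .
    have "Hantipode F G lact ract \<sigma> \<tau> c = (\<Sum>i\<in>C_index f. fscale (c' (antipode_index i)) (bvec (antipode_index i)))"
      unfolding Hantipode_C[OF cC]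
      using antipode_coeff_nonzero C_index_subset[OF f] by (intro sum.cong refl) (auto simp: c_def)
    also have "\<dots> = (\<Sum>q\<in>antipode_index ` C_index f. fscale (c' q) (bvec q))"
      by (rule sum.reindex[OF inj, symmetric, unfolded comp_def])
    also have "\<dots> = c'"
      unfolding antipode_index_C_index using supported_on_expand[OF finite_C_index c'] by simp
    finally show "c' \<in> Hantipode F G lact ract \<sigma> \<tau> ` C f" using cC by (metis image_eqI)
  qed
qed

end

lemma Hantipode_image_C_iff:
  "Hantipode F G lact ract \<sigma> \<tau> ` C f = C f \<longleftrightarrow> inv_stabilizer F G lact f \<noteq> {}"
proof
  assume "Hantipode F G lact ract \<sigma> \<tau> ` C f = C f"
  then show "inv_stabilizer F G lact f \<noteq> {}"
    using inv_orbit_if_Hantipode_C inv_stabilizer_nonempty_iff by simp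
next
  assume "inv_stabilizer F G lact f \<noteq> {}"
  then show "Hantipode F G lact ract \<sigma> \<tau> ` C f = C f"
    using Hantipode_image_C inv_stabilizer_nonempty_iff by simp
qed

end

end



section \<open>The Hopf subalgebra \<open>C\<^sub>1\<close> and its isomorphism with \<open>\<Bbbk>\<^sup>G\<close>\<close>

context matched_pair
begin

lemma C_index_one: "C_index \<one>\<^bsub>F\<^esub> = carrier G \<times> {\<one>\<^bsub>F\<^esub>}"
  by (simp add: C_index_def orbit_one)

lemma C_one_memD:
  assumes "x \<in> C \<one>\<^bsub>F\<^esub>" "x (g, h) \<noteq> 0"
  shows "g \<in> carrier G" "h = \<one>\<^bsub>F\<^esub>"
  using supported_onD[OF assms] by (simp_all add: C_index_one)

lemma sum_C_index_one: "(\<Sum>i\<in>C_index \<one>\<^bsub>F\<^esub>. P i) = (\<Sum>g\<in>carrier G. P (g, \<one>\<^bsub>F\<^esub>))"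
proof -
  have "C_index \<one>\<^bsub>F\<^esub> = (\<lambda>g. (g, \<one>\<^bsub>F\<^esub>)) ` carrier G" by (auto simp: C_index_one)
  then show ?thesis by (simp add: sum.reindex inj_on_def)
qed

definition to_kG :: "('g \<times> 'f \<Rightarrow> 'k) \<Rightarrow> 'g \<Rightarrow> 'k" where
  "to_kG x = (\<lambda>g. x (g, \<one>\<^bsub>F\<^esub>))"

lemma supp_C_one: "x \<in> C \<one>\<^bsub>F\<^esub> \<Longrightarrow> supp x = (\<lambda>g. (g, \<one>\<^bsub>F\<^esub>)) ` supp (to_kG x)"
  by (auto simp: supp_def to_kG_def image_iff dest: C_one_memD)

lemma supp_to_kG: "x \<in> C \<one>\<^bsub>F\<^esub> \<Longrightarrow> supp (to_kG x) \<subseteq> carrier G"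
  by (auto simp: supp_def to_kG_def dest: C_one_memD)

lemma sum_supp_C_one:
  "x \<in> C \<one>\<^bsub>F\<^esub> \<Longrightarrow> (\<Sum>i\<in>supp x. P i) = (\<Sum>g\<in>supp (to_kG x). P (g, \<one>\<^bsub>F\<^esub>))"
  by (simp add: supp_C_one sum.reindex inj_on_def)

lemma Hunit_C_one: "Hunit F G \<in> C \<one>\<^bsub>F\<^esub>"
proof -
  have "Hunit F G = (\<Sum>i\<in>C_index \<one>\<^bsub>F\<^esub>. bvec i)"
    by (simp add: Hunit_def sum_C_index_one fun_eq_iff sum_fun_apply)
  also have "\<dots> \<in> C \<one>\<^bsub>F\<^esub>"
    by (intro V.subspace_sum[OF subspace_supported_on] bvec_supported_on)
  finally show ?thesis .
qed

lemma Hmult_C_one_apply: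
  assumes x: "x \<in> C \<one>\<^bsub>F\<^esub>" and y: "y \<in> C \<one>\<^bsub>F\<^esub>"
  shows "Hmult F G ract \<sigma> x y j = (\<Sum>g\<in>supp (to_kG x). \<Sum>g'\<in>supp (to_kG y).
      to_kG x g * to_kG y g' * ((if g = g' then 1 else 0) * bvec (g, \<one>\<^bsub>F\<^esub>) j))"
  unfolding Hmult_def bilin_ext_def sum_supp_C_one[OF x] sum_supp_C_one[OF y]
proof (intro sum.cong refl)
  fix g g' assume "g \<in> supp (to_kG x)"
  then have "g \<in> carrier G" using supp_to_kG[OF x] by auto
  then show "x (g, \<one>\<^bsub>F\<^esub>) * y (g', \<one>\<^bsub>F\<^esub>) * (case (g, \<one>\<^bsub>F\<^esub>) of (g, f) \<Rightarrow> \<lambda>(g', f') j.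
        (if ract g f = g' then \<sigma> g f f' else 0) * bvec (g, f \<otimes>\<^bsub>F\<^esub> f') j) (g', \<one>\<^bsub>F\<^esub>) j
      = to_kG x g * to_kG y g' * ((if g = g' then 1 else 0) * bvec (g, \<one>\<^bsub>F\<^esub>) j)"
    using sigma_norm[of g "\<one>\<^bsub>F\<^esub>" "\<one>\<^bsub>F\<^esub>"]
    by (cases "g = g'") (simp_all add: ract_one to_kG_def)
qed

lemma Hmult_C_one:
  assumes x: "x \<in> C \<one>\<^bsub>F\<^esub>" and y: "y \<in> C \<one>\<^bsub>F\<^esub>"
  shows "Hmult F G ract \<sigma> x y \<in> C \<one>\<^bsub>F\<^esub>"
proof -
  have "Hmult F G ract \<sigma> x y = (\<Sum>g\<in>supp (to_kG x). \<Sum>g'\<in>supp (to_kG y).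
      fscale (to_kG x g * to_kG y g' * (if g = g' then 1 else 0)) (bvec (g, \<one>\<^bsub>F\<^esub>)))"
    by (simp add: fun_eq_iff Hmult_C_one_apply[OF x y] sum_fun_apply mult.assoc)
  also have "\<dots> \<in> C \<one>\<^bsub>F\<^esub>"
    using supp_to_kG[OF x]
    by (intro V.subspace_sum[OF subspace_supported_on] V.subspace_scale[OF subspace_supported_on]
        bvec_supported_on) (auto simp: C_index_one)
  finally show ?thesis .
qed

lemma Hantipode_C_one:
  assumes x: "x \<in> C \<one>\<^bsub>F\<^esub>"
  shows "Hantipode F G lact ract \<sigma> \<tau> x
    = (\<Sum>g\<in>carrier G. fscale (x (g, \<one>\<^bsub>F\<^esub>)) (bvec (inv\<^bsub>G\<^esub> g, \<one>\<^bsub>F\<^esub>)))"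
proof -
  have "antipode_index (g, \<one>\<^bsub>F\<^esub>) = (inv\<^bsub>G\<^esub> g, \<one>\<^bsub>F\<^esub>)" "antipode_coeff (g, \<one>\<^bsub>F\<^esub>) = 1"
    if "g \<in> carrier G" for g
    using that sigma_norm[of "inv\<^bsub>G\<^esub> g" "\<one>\<^bsub>F\<^esub>" "\<one>\<^bsub>F\<^esub>"] tau_norm[of "inv\<^bsub>G\<^esub> g" g "\<one>\<^bsub>F\<^esub>"]
    by (simp_all add: antipode_index_def antipode_coeff_def ract_one)
  then show ?thesis
    unfolding Hantipode_C[OF F.one_closed x] sum_C_index_one by simp
qed

lemma Hopf_subalgebra_C_one: "Hopf_subalgebra F G lact ract \<sigma> \<tau> (C \<one>\<^bsub>F\<^esub>)"
  unfolding Hopf_subalgebra_def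
proof (intro conjI ballI C_subcoalgebra[OF F.one_closed] Hunit_C_one Hmult_C_one)
  fix x assume "x \<in> C \<one>\<^bsub>F\<^esub>"
  then show "Hantipode F G lact ract \<sigma> \<tau> x \<in> C \<one>\<^bsub>F\<^esub>"
    unfolding Hantipode_C_one[OF \<open>x \<in> C \<one>\<^bsub>F\<^esub>\<close>]
    by (intro V.subspace_sum[OF subspace_supported_on] V.subspace_scale[OF subspace_supported_on]
        bvec_supported_on) (simp add: C_index_one)
qed


lemma linear_on_to_kG: "linear_on (C \<one>\<^bsub>F\<^esub>) to_kG"
  by (simp add: linear_on_def to_kG_def)

lemma to_kG_bvec: "to_kG (bvec (g, \<one>\<^bsub>F\<^esub>)) = bvec g"
  by (auto simp: to_kG_def bvec_def fun_eq_iff)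

lemma bij_betw_to_kG: "bij_betw to_kG (C \<one>\<^bsub>F\<^esub>) (kGspace G)"
proof (rule bij_betw_byWitness[where f'="\<lambda>u q. if snd q = \<one>\<^bsub>F\<^esub> then u (fst q) else 0"])
  show "\<forall>x\<in>C \<one>\<^bsub>F\<^esub>. (\<lambda>q. if snd q = \<one>\<^bsub>F\<^esub> then to_kG x (fst q) else 0) = x"
    by (auto simp: to_kG_def fun_eq_iff dest: C_one_memD)
  show "\<forall>u\<in>kGspace G. to_kG (\<lambda>q. if snd q = \<one>\<^bsub>F\<^esub> then u (fst q) else 0) = u"
    by (simp add: to_kG_def)
  show "to_kG ` C \<one>\<^bsub>F\<^esub> \<subseteq> kGspace G"
    using supp_to_kG G_finite by (auto simp: kGspace_def fin_fun_def intro: finite_subset)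
  show "(\<lambda>u q. if snd q = \<one>\<^bsub>F\<^esub> then u (fst q) else 0) ` kGspace G \<subseteq> C \<one>\<^bsub>F\<^esub>"
    by (auto simp: supported_on_def supp_def C_index_one kGspace_def fin_fun_def split: if_splits)
qed

lemma to_kG_Hmult:
  "x \<in> C \<one>\<^bsub>F\<^esub> \<Longrightarrow> y \<in> C \<one>\<^bsub>F\<^esub> \<Longrightarrow> to_kG (Hmult F G ract \<sigma> x y) = kGmult (to_kG x) (to_kG y)"
  unfolding to_kG_def[of "Hmult F G ract \<sigma> x y"] kGmult_def bilin_ext_def
  by (auto simp: fun_eq_iff Hmult_C_one_apply bvec_def intro!: sum.cong)

lemma to_kG_Hunit: "to_kG (Hunit F G) = kGunit G"
  by (auto simp: to_kG_def Hunit_def kGunit_def bvec_def fun_eq_iff)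

lemma to_kG_Hcounit: "x \<in> C \<one>\<^bsub>F\<^esub> \<Longrightarrow> kGcounit G (to_kG x) = Hcounit F G x"
  unfolding kGcounit_def Hcounit_def by (simp add: sum_supp_C_one to_kG_def)

lemma to_kG_Hantipode:
  assumes x: "x \<in> C \<one>\<^bsub>F\<^esub>"
  shows "to_kG (Hantipode F G lact ract \<sigma> \<tau> x) = kGantipode G (to_kG x)"
proof
  fix g0
  have "to_kG (Hantipode F G lact ract \<sigma> \<tau> x) g0 = (\<Sum>g\<in>carrier G. to_kG x g * bvec (inv\<^bsub>G\<^esub> g) g0)"
    by (simp add: Hantipode_C_one[OF x] to_kG_def sum_fun_apply bvec_def)
  also have "\<dots> = (\<Sum>g\<in>supp (to_kG x). to_kG x g * bvec (inv\<^bsub>G\<^esub> g) g0)"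
    using supp_to_kG[OF x] G_finite by (intro sum.mono_neutral_right) (auto simp: supp_def)
  also have "\<dots> = kGantipode G (to_kG x) g0"
    by (simp add: kGantipode_def lin_ext_def)
  finally show "to_kG (Hantipode F G lact ract \<sigma> \<tau> x) g0 = kGantipode G (to_kG x) g0" .
qed

lemma kGcomul_apply:
  fixes u :: "'g \<Rightarrow> 'k"
  assumes u: "finite (supp u)" "supp u \<subseteq> carrier G"
  shows "kGcomul G u (a, b) = (if a \<in> carrier G \<and> b \<in> carrier G then u (a \<otimes>\<^bsub>G\<^esub> b) else 0)"
proof -
  have inner: "(\<Sum>y\<in>carrier G. tensor (bvec (g \<otimes>\<^bsub>G\<^esub> inv\<^bsub>G\<^esub> y)) (bvec y) (a, b))
      = (if g = a \<otimes>\<^bsub>G\<^esub> b \<and> a \<in> carrier G \<and> b \<in> carrier G then 1 else (0::'k))"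
    if g: "g \<in> carrier G" for g
  proof -
    have "(\<Sum>y\<in>carrier G. tensor (bvec (g \<otimes>\<^bsub>G\<^esub> inv\<^bsub>G\<^esub> y)) (bvec y) (a, b))
        = (\<Sum>y\<in>carrier G. if y = b then (if g \<otimes>\<^bsub>G\<^esub> inv\<^bsub>G\<^esub> b = a then 1 else 0) else (0::'k))"
      by (intro sum.cong refl) (auto simp: tensor_def bvec_def)
    also have "\<dots> = (if b \<in> carrier G \<and> g \<otimes>\<^bsub>G\<^esub> inv\<^bsub>G\<^esub> b = a then 1 else 0)"
      by (simp add: sum.delta' G_finite)
    also have "\<dots> = (if g = a \<otimes>\<^bsub>G\<^esub> b \<and> a \<in> carrier G \<and> b \<in> carrier G then 1 else 0)"
      using G_mult_inv_eq_iff[OF g] by auto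
    finally show ?thesis .
  qed
  have "kGcomul G u (a, b) = (\<Sum>g\<in>supp u. u g *
      (\<Sum>y\<in>carrier G. tensor (bvec (g \<otimes>\<^bsub>G\<^esub> inv\<^bsub>G\<^esub> y)) (bvec y) (a, b)))"
    by (simp add: kGcomul_def lin_ext_def)
  also have "\<dots> = (\<Sum>g\<in>supp u. if g = a \<otimes>\<^bsub>G\<^esub> b then
      (if a \<in> carrier G \<and> b \<in> carrier G then u g else 0) else 0)"
    using u(2) by (intro sum.cong refl) (auto simp: inner)
  also have "\<dots> = (if a \<in> carrier G \<and> b \<in> carrier G then u (a \<otimes>\<^bsub>G\<^esub> b) else 0)"
    using u(1) by (auto simp: sum.delta' supp_def)
  finally show ?thesis .
qed

lemma to_kG_Hcomul:
  assumes x: "x \<in> C \<one>\<^bsub>F\<^esub>"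
  shows "kGcomul G (to_kG x) = tensor_map to_kG to_kG (Hcomul F G lact \<tau> x)"
proof
  fix ab :: "'g \<times> 'g"
  obtain a b where ab: "ab = (a, b)" by (cases ab)
  let ?T = "Hcomul F G lact \<tau> x"
  have "finite (supp ?T)"
    using Hcomul_C[OF F.one_closed x] finite_C_index
    by (auto simp: supported_on_def intro: finite_subset)
  have "tensor_map to_kG to_kG ?T (a, b)
      = (\<Sum>p\<in>supp ?T. ?T p * (bvec (fst p) (a, \<one>\<^bsub>F\<^esub>) * bvec (snd p) (b, \<one>\<^bsub>F\<^esub>)))"
    by (simp add: tensor_map_def lin_ext_def case_prod_beta tensor_def to_kG_def)
  also have "\<dots> = (\<Sum>p\<in>supp ?T. if p = ((a, \<one>\<^bsub>F\<^esub>), (b, \<one>\<^bsub>F\<^esub>)) then ?T p else 0)"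
    by (intro sum.cong refl) (auto simp: bvec_def)
  also have "\<dots> = ?T ((a, \<one>\<^bsub>F\<^esub>), (b, \<one>\<^bsub>F\<^esub>))"
    using \<open>finite (supp ?T)\<close> by (auto simp: sum.delta' supp_def)
  also have "\<dots> = rhit (b, \<one>\<^bsub>F\<^esub>) x (a, \<one>\<^bsub>F\<^esub>)"
    using Hcomul_apply C_subset_Hspace[OF F.one_closed] x by auto
  also have "\<dots> = (if a \<in> carrier G \<and> b \<in> carrier G then to_kG x (a \<otimes>\<^bsub>G\<^esub> b) else 0)"
    using tau_norm[of a b "\<one>\<^bsub>F\<^esub>"] by (auto simp: rhit_def to_kG_def)
  also have "\<dots> = kGcomul G (to_kG x) (a, b)"
    using supp_to_kG[OF x] G_finite by (simp add: kGcomul_apply finite_subset)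
  finally show "kGcomul G (to_kG x) ab = tensor_map to_kG to_kG ?T ab" using ab by simp
qed

end


theorem lemma4p1:
  fixes F :: "'f monoid" and G :: "'g monoid"
    and lact :: "'g \<Rightarrow> 'f \<Rightarrow> 'f" and ract :: "'g \<Rightarrow> 'f \<Rightarrow> 'g"
    and \<sigma> :: "'g \<Rightarrow> 'f \<Rightarrow> 'f \<Rightarrow> 'k::field_char_0"
    and \<tau> :: "'g \<Rightarrow> 'g \<Rightarrow> 'f \<Rightarrow> 'k"
  assumes alg_closed: "\<And>p :: 'k poly. degree p > 0 \<Longrightarrow> \<exists>x. poly p x = 0"
    and mp: "matched_pair F G lact ract \<sigma> \<tau>"
  shows
    "(\<forall>f\<in>carrier F.
        cosemisimple_subcoalgebra (Hspace F G) (Hcomul F G lact \<tau>) (Csub F G lact f))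
     \<and> Hopf_subalgebra F G lact ract \<sigma> \<tau> (Csub F G lact \<one>\<^bsub>F\<^esub>)
     \<and> cosemisimple_subcoalgebra (Hspace F G) (Hcomul F G lact \<tau>) (Csub F G lact \<one>\<^bsub>F\<^esub>)
     \<and> (\<exists>\<phi> :: ('g \<times> 'f \<Rightarrow> 'k) \<Rightarrow> 'g \<Rightarrow> 'k.
          linear_on (Csub F G lact \<one>\<^bsub>F\<^esub>) \<phi>
          \<and> (\<forall>g\<in>carrier G. \<phi> (bvec (g, \<one>\<^bsub>F\<^esub>)) = bvec g)
          \<and> bij_betw \<phi> (Csub F G lact \<one>\<^bsub>F\<^esub>) (kGspace G)
          \<and> (\<forall>x\<in>Csub F G lact \<one>\<^bsub>F\<^esub>. \<forall>y\<in>Csub F G lact \<one>\<^bsub>F\<^esub>.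
                \<phi> (Hmult F G ract \<sigma> x y) = kGmult (\<phi> x) (\<phi> y))
          \<and> \<phi> (Hunit F G) = kGunit G
          \<and> (\<forall>x\<in>Csub F G lact \<one>\<^bsub>F\<^esub>.
                kGcomul G (\<phi> x) = tensor_map \<phi> \<phi> (Hcomul F G lact \<tau> x))
          \<and> (\<forall>x\<in>Csub F G lact \<one>\<^bsub>F\<^esub>. kGcounit G (\<phi> x) = Hcounit F G x)
          \<and> (\<forall>x\<in>Csub F G lact \<one>\<^bsub>F\<^esub>.
                \<phi> (Hantipode F G lact ract \<sigma> \<tau> x) = kGantipode G (\<phi> x)))
     \<and> (\<forall>f\<in>carrier F. stabilizer G lact f = {\<one>\<^bsub>G\<^esub>} \<longrightarrow>
          simple_subcoalgebra (Hspace F G) (Hcomul F G lact \<tau>) (Csub F G lact f)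
          \<and> (Hantipode F G lact ract \<sigma> \<tau> ` Csub F G lact f = Csub F G lact f
              \<longleftrightarrow> inv_stabilizer F G lact f \<noteq> {}))"
proof -
  interpret matched_pair F G lact ract \<sigma> \<tau> by (rule mp)
  have "card (carrier G) \<noteq> 0" using G_finite G.one_closed by auto
  then have nG: "(of_nat (card (carrier G)) :: 'k) \<noteq> 0" by simp
  have C1: "Csub F G lact \<one>\<^bsub>F\<^esub> = C \<one>\<^bsub>F\<^esub>" by (rule Csub_eq_C[OF F.one_closed])
  show ?thesis
    unfolding C1
    by (intro conjI ballI impI exI[of _ to_kG])
      (simp_all add: Csub_eq_C C_cosemisimple[OF _ nG] C_simple Hantipode_image_C_iff
        Hopf_subalgebra_C_one linear_on_to_kG to_kG_bvec bij_betw_to_kG to_kG_Hmult to_kG_Hunit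
        to_kG_Hcomul to_kG_Hcounit to_kG_Hantipode)
qed

end
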